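(* Let $M_t$ be a family of smooth closed strictly convex solutions to $\frac{d}{dt}X=\frac1K\nu$ in $\mathbb{R}^3$ on a maximal time interval $[0,T)$. Then $T<\infty$.
   Context: $X$ denotes the embedding, $\nu$ the outer unit normal, $K$ the Gauss curvature. *)

theory Defs
  imports "HOL-Analysis.Analysis"
begin

text \<open>C-infinity smoothness on an open set: all iterated Frechet derivatives exist.
  D vs x is the iterated directional derivative of f at x along the directions in vs.\<close>
definition smooth_on :: "'a::real_normed_vector set \<Rightarrow> ('a \<Rightarrow> 'b::real_normed_vector) \<Rightarrow> bool" where
  "smooth_on S f \<longleftrightarrow> open S \<and>
     (\<exists>D :: 'a list \<Rightarrow> 'a \<Rightarrow> 'b. (\<forall>x\<in>S. D [] x = f x) \<and>
        (\<forall>vs. \<forall>x\<in>S. (D vs has_derivative (\<lambda>h. D (h # vs) x)) (at x)))"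

abbreviation S2 :: "(real^3) set" where "S2 \<equiv> sphere 0 1"

text \<open>Inverse stereographic projections from the north and the south pole; together
  they form an atlas of the unit sphere S2.\<close>
definition chartN :: "real^2 \<Rightarrow> real^3" where
  "chartN w = (let s = (w$1)^2 + (w$2)^2 in
     vector [2 * w$1 / (1 + s), 2 * w$2 / (1 + s), (s - 1) / (1 + s)])"

definition chartS :: "real^2 \<Rightarrow> real^3" where
  "chartS w = (let s = (w$1)^2 + (w$2)^2 in
     vector [2 * w$1 / (1 + s), 2 * w$2 / (1 + s), (1 - s) / (1 + s)])"

definition charts :: "(real^2 \<Rightarrow> real^3) set" where
  "charts = {chartN, chartS}"

definition pd :: "(real^2 \<Rightarrow> real^3) \<Rightarrow> 2 \<Rightarrow> real^2 \<Rightarrow> real^3" where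
  "pd Y i w = frechet_derivative Y (at w) (axis i 1)"

definition pd2 :: "(real^2 \<Rightarrow> real^3) \<Rightarrow> 2 \<Rightarrow> 2 \<Rightarrow> real^2 \<Rightarrow> real^3" where
  "pd2 Y i j w = frechet_derivative (pd Y i) (at w) (axis j 1)"

text \<open>Gauss curvature K = det II / det I of the local parametrisation Y at w
  (independent of the choice of the sign of the unit normal).\<close>
definition gauss_curv_chart :: "(real^2 \<Rightarrow> real^3) \<Rightarrow> real^2 \<Rightarrow> real" where
  "gauss_curv_chart Y w =
    (let n = (1 / norm (cross3 (pd Y 1 w) (pd Y 2 w))) *\<^sub>R cross3 (pd Y 1 w) (pd Y 2 w);
         E = pd Y 1 w \<bullet> pd Y 1 w; F = pd Y 1 w \<bullet> pd Y 2 w; G = pd Y 2 w \<bullet> pd Y 2 w;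
         L = pd2 Y 1 1 w \<bullet> n; M = pd2 Y 1 2 w \<bullet> n; N = pd2 Y 2 2 w \<bullet> n
     in (L * N - M^2) / (E * G - F^2))"

definition closed_strictly_convex :: "(real^3 \<Rightarrow> real^3) \<Rightarrow> bool" where
  "closed_strictly_convex \<Phi> \<longleftrightarrow>
     inj_on \<Phi> S2 \<and> continuous_on S2 \<Phi> \<and>
     (\<forall>\<sigma>\<in>charts. smooth_on UNIV (\<Phi> \<circ> \<sigma>) \<and>
        (\<forall>w. cross3 (pd (\<Phi> \<circ> \<sigma>) 1 w) (pd (\<Phi> \<circ> \<sigma>) 2 w) \<noteq> 0 \<and>
             gauss_curv_chart (\<Phi> \<circ> \<sigma>) w > 0)) \<and>
     convex (\<Phi> ` S2 \<union> inside (\<Phi> ` S2))"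

definition is_outer_normal :: "(real^3 \<Rightarrow> real^3) \<Rightarrow> (real^2 \<Rightarrow> real^3) \<Rightarrow> real^2 \<Rightarrow> real^3 \<Rightarrow> bool" where
  "is_outer_normal \<Phi> \<sigma> w n \<longleftrightarrow>
     norm n = 1 \<and> n \<bullet> pd (\<Phi> \<circ> \<sigma>) 1 w = 0 \<and> n \<bullet> pd (\<Phi> \<circ> \<sigma>) 2 w = 0 \<and>
     (\<forall>\<^sub>F s in at_right 0. \<Phi> (\<sigma> w) + s *\<^sub>R n \<in> outside (\<Phi> ` S2))"

text \<open>X p t = position at time t of the point with label p \<in> S2. A solution of
  dX/dt = (1/K) \<nu> by smooth closed strictly convex surfaces on [0,T).\<close>
definition ICF_solution :: "(real^3 \<Rightarrow> real \<Rightarrow> real^3) \<Rightarrow> ereal \<Rightarrow> bool" where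
  "ICF_solution X T \<longleftrightarrow>
     0 < T \<and>
     (\<forall>t. 0 \<le> t \<and> ereal t < T \<longrightarrow> closed_strictly_convex (\<lambda>p. X p t)) \<and>
     continuous_on (S2 \<times> {t. 0 \<le> t \<and> ereal t < T}) (\<lambda>(p, t). X p t) \<and>
     (\<forall>\<sigma>\<in>charts. smooth_on {(w, t). 0 < t \<and> ereal t < T} (\<lambda>(w, t). X (\<sigma> w) t)) \<and>
     (\<forall>\<sigma>\<in>charts. \<forall>w t. 0 < t \<and> ereal t < T \<longrightarrow>
        (\<exists>n. is_outer_normal (\<lambda>p. X p t) \<sigma> w n \<and>
             ((\<lambda>s. X (\<sigma> w) s) has_vector_derivative
                 (1 / gauss_curv_chart (\<lambda>w'. X (\<sigma> w') t) w) *\<^sub>R n) (at t)))"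

definition maximal_ICF_solution :: "(real^3 \<Rightarrow> real \<Rightarrow> real^3) \<Rightarrow> ereal \<Rightarrow> bool" where
  "maximal_ICF_solution X T \<longleftrightarrow> ICF_solution X T \<and>
     \<not> (\<exists>T' Y. T < T' \<and> ICF_solution Y T' \<and>
            (\<forall>p\<in>S2. \<forall>t. 0 \<le> t \<and> ereal t < T \<longrightarrow> Y p t = X p t))"

end

(*
  Let c be a point enclosed by the surface M_t and let r(t) be its distance to M_t.  At a
  point of M_t nearest to c the surface touches the sphere of radius r about c from outside,
  so its outer normal is radial and its Gauss curvature K is at most 1/r^2: the point moves
  away from c with speed 1/K >= r^2.  Compactness of the chart discs makes this uniform, so
  the right Dini derivative of r is at least r^2, and c stays enclosed at all later times.
  As for r' = r^2, r would then blow up in finite time, so no solution exists for all t.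
*)

theory Submission
  imports Defs
begin

section \<open>Real analysis\<close>

lemma derivatives_at_global_min:
  fixes \<phi> \<phi>' :: "real \<Rightarrow> real"
  assumes deriv: "\<And>s. (\<phi> has_real_derivative \<phi>' s) (at s)"
    and deriv2: "(\<phi>' has_real_derivative \<phi>'') (at 0)"
    and min: "\<And>s. \<phi> 0 \<le> \<phi> s"
  shows "\<phi>' 0 = 0" and "\<phi>'' \<ge> 0"
proof -
  show crit: "\<phi>' 0 = 0"
    using DERIV_local_min[OF deriv[of 0], of 1] min by auto
  show "\<phi>'' \<ge> 0"
  proof (rule ccontr)
    assume "\<not> \<phi>'' \<ge> 0"
    hence "\<forall>\<^sub>F h in at 0. (\<phi>' (0 + h) - \<phi>' 0) / h < 0"
      using deriv2 by (intro order_tendstoD(2)) (auto simp: DERIV_def)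
    then obtain d where d: "d > 0" and quot: "\<And>h. h \<noteq> 0 \<Longrightarrow> dist h 0 < d \<Longrightarrow> \<phi>' h / h < 0"
      using crit by (auto simp: eventually_at)
    obtain z where z: "0 < z" "z < d/2" "\<phi> (d/2) - \<phi> 0 = (d/2 - 0) * \<phi>' z"
      using MVT2[of 0 "d/2" \<phi> \<phi>'] d deriv by auto
    have "\<phi>' z < 0" using quot[of z] z by (auto simp: divide_less_0_iff)
    hence "(d/2 - 0) * \<phi>' z < 0" using d by (simp add: mult_pos_neg)
    hence "\<phi> (d/2) < \<phi> 0" using z(3) by linarith
    thus False using min[of "d/2"] by simp
  qed
qed

lemma continuous_induction:
  fixes P :: "real \<Rightarrow> bool"
  assumes start: "P a"
    and left_limit: "\<And>t. a < t \<Longrightarrow> (\<And>s. a \<le> s \<Longrightarrow> s < t \<Longrightarrow> P s) \<Longrightarrow> P t"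
    and right_step: "\<And>t. a \<le> t \<Longrightarrow> P t \<Longrightarrow> \<exists>d>0. \<forall>s. t < s \<and> s < t + d \<longrightarrow> P s"
    and "a \<le> b"
  shows "P b"
proof (rule ccontr)
  assume "\<not> P b"
  define A where "A = {s. a \<le> s \<and> \<not> P s}"
  have bA: "b \<in> A" using \<open>\<not> P b\<close> \<open>a \<le> b\<close> by (simp add: A_def)
  have bdd: "bdd_below A" by (auto simp: A_def bdd_below_def)
  define t where "t = Inf A"
  have at: "a \<le> t" unfolding t_def using bA by (intro cInf_greatest) (auto simp: A_def)
  have below: "P s" if "a \<le> s" "s < t" for s
    using cInf_lower[OF _ bdd, of s] that by (force simp: A_def t_def)
  have "P t"
    using start left_limit[OF _ below] at by (cases "a = t") auto
  then obtain d where d: "d > 0" "\<And>s. t < s \<Longrightarrow> s < t + d \<Longrightarrow> P s"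
    using right_step[OF at] by blast
  have "t + d \<le> s" if "s \<in> A" for s
    using cInf_lower[OF that bdd] d(2)[of s] \<open>P t\<close> that by (force simp: A_def t_def)
  hence "t + d \<le> t" unfolding t_def using bA by (intro cInf_greatest) auto
  thus False using d(1) by simp
qed

lemma growth_from_right_lower_bound:
  fixes f :: "real \<Rightarrow> real"
  assumes ab: "a \<le> b" and cont: "continuous_on {a..b} f"
    and right: "\<And>t. a \<le> t \<Longrightarrow> t < b \<Longrightarrow> \<exists>\<delta>>0. \<forall>s. 0 < s \<and> s < \<delta> \<longrightarrow> f t + s * L \<le> f (t + s)"
  shows "f a + L * (b - a) \<le> f b"
proof -
  let ?P = "\<lambda>t. t \<le> b \<longrightarrow> f a + L * (t - a) \<le> f t"
  have "?P b"
  proof (rule continuous_induction[where P = ?P, OF _ _ _ ab])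
    show "?P a" by simp
  next
    fix t assume at: "a < t" and IH: "\<And>s. a \<le> s \<Longrightarrow> s < t \<Longrightarrow> ?P s"
    show "?P t"
    proof
      assume tb: "t \<le> b"
      have "((\<lambda>s. f s - L * (s - a)) \<longlongrightarrow> f t - L * (t - a)) (at_left t)"
        using continuous_on_subset[OF cont, of "{a..t}"] at tb
        by (auto intro!: tendsto_intros simp: continuous_on_Icc_at_leftD)
      moreover have "\<forall>\<^sub>F s in at_left t. f a \<le> f s - L * (s - a)"
        using IH tb unfolding eventually_at_left_field
        by (intro exI[of _ a]) (auto simp: at algebra_simps)
      ultimately have "f a \<le> f t - L * (t - a)"
        by (rule tendsto_lowerbound) simp
      thus "f a + L * (t - a) \<le> f t" by simp
    qed
  next
    fix t assume at: "a \<le> t" and Pt: "?P t"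
    show "\<exists>d>0. \<forall>s. t < s \<and> s < t + d \<longrightarrow> ?P s"
    proof (cases "t < b")
      case True
      then obtain \<delta> where \<delta>: "\<delta> > 0" "\<And>s. 0 < s \<Longrightarrow> s < \<delta> \<Longrightarrow> f t + s * L \<le> f (t + s)"
        using right[OF at] by blast
      have "?P s" if "t < s" "s < t + \<delta>" for s
        using \<delta>(2)[of "s - t"] Pt True that by (auto simp: algebra_simps)
      thus ?thesis using \<delta>(1) by blast
    qed (auto intro: exI[of _ 1])
  qed
  thus ?thesis by simp
qed

lemma growth_from_right_Dini_bound:
  fixes f :: "real \<Rightarrow> real"
  assumes ab: "a \<le> b" and cont: "continuous_on {a..b} f"
    and Dini: "\<And>t e. a \<le> t \<Longrightarrow> t < b \<Longrightarrow> e > 0 \<Longrightarrow>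
                 \<exists>\<delta>>0. \<forall>s. 0 < s \<and> s < \<delta> \<longrightarrow> f t + s * (L - e) \<le> f (t + s)"
  shows "f a + L * (b - a) \<le> f b"
proof (cases "a = b")
  case False
  with ab have ba: "b - a > 0" by simp
  have "f a + L * (b - a) \<le> f b + e" if e: "e > 0" for e
  proof -
    have "f a + (L - e / (b - a)) * (b - a) \<le> f b"
      using growth_from_right_lower_bound[OF ab cont Dini] e ba by simp
    moreover have "(L - e / (b - a)) * (b - a) = L * (b - a) - e"
      using ba by (simp add: field_simps)
    ultimately show ?thesis by simp
  qed
  thus ?thesis by (rule field_le_epsilon)
qed simp

text \<open>As for the Riccati equation \<open>f' = f\<^sup>2\<close>: \<open>f\<close> at least doubles over a time interval of
  length \<open>1 / f\<close>, so it would exceed every \<open>2\<^sup>k f a\<close> before time \<open>a + 2 / f a\<close>.\<close>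
lemma quadratic_growth_blows_up:
  fixes f :: "real \<Rightarrow> real"
  assumes pos: "0 < f a"
    and growth: "\<And>s t. a \<le> s \<Longrightarrow> s \<le> t \<Longrightarrow> f s + (f s)\<^sup>2 * (t - s) \<le> f t"
  shows False
proof -
  define r where "r = f a"
  define \<tau> where "\<tau> k = a + (2 / r) * (1 - 1 / 2 ^ k)" for k :: nat
  have r: "r > 0" using pos by (simp add: r_def)
  have "0 \<le> 1 - 1 / (2::real) ^ k" "1 - 1 / 2 ^ k \<le> (1::real)" for k :: nat
    by simp_all
  hence \<tau>_ge: "a \<le> \<tau> k" and \<tau>_le: "\<tau> k \<le> a + 2 / r" for k
    using r mult_left_mono[of "1 - 1 / 2 ^ k" 1 "2 / r"] mult_nonneg_nonneg[of "2 / r" "1 - 1 / 2 ^ k"]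
    by (auto simp: \<tau>_def)
  have \<tau>_step: "\<tau> (Suc k) - \<tau> k = 1 / (2 ^ k * r)" for k
    using r by (simp add: \<tau>_def field_simps)
  have doubling: "2 ^ k * r \<le> f (\<tau> k)" for k
  proof (induction k)
    case 0 thus ?case by (simp add: \<tau>_def r_def)
  next
    case (Suc k)
    have "f (\<tau> k) + (f (\<tau> k))\<^sup>2 * (\<tau> (Suc k) - \<tau> k) \<le> f (\<tau> (Suc k))"
    proof (rule growth[OF \<tau>_ge])
      have "0 < 1 / ((2::real) ^ k * r)" using r by simp
      thus "\<tau> k \<le> \<tau> (Suc k)" using \<tau>_step[of k] by linarith
    qed
    moreover have "f (\<tau> k) \<le> (f (\<tau> k))\<^sup>2 * (\<tau> (Suc k) - \<tau> k)"
    proof -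
      have "0 < 2 ^ k * r" using r by simp
      moreover have "2 ^ k * r * f (\<tau> k) \<le> f (\<tau> k) * f (\<tau> k)"
        using Suc \<open>0 < 2 ^ k * r\<close> by (intro mult_right_mono) auto
      ultimately show ?thesis by (simp add: \<tau>_step power2_eq_square field_simps)
    qed
    ultimately show ?case using Suc by simp
  qed
  obtain k where "f (a + 2 / r) / r < 2 ^ k" using real_arch_pow[of 2] by auto
  hence "f (a + 2 / r) < 2 ^ k * r" using r by (simp add: divide_less_eq)
  moreover have "f (\<tau> k) \<le> f (a + 2 / r)"
    using growth[OF \<tau>_ge \<tau>_le, of k] \<tau>_le[of k] by (smt (verit) mult_nonneg_nonneg zero_le_power2)
  ultimately show False using doubling[of k] by simp
qed

section \<open>Iterated directional derivatives\<close>

text \<open>\<open>D vs x\<close> plays the role of the iterated directional derivative of \<open>D []\<close> at \<open>x\<close>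
  along the directions \<open>vs\<close>, the most recent direction at the head, as in \<^const>\<open>smooth_on\<close>.\<close>
locale derivative_tower =
  fixes D :: "'a::real_normed_vector list \<Rightarrow> 'a \<Rightarrow> 'b::real_inner"
  assumes has_derivative_tower: "(D vs has_derivative (\<lambda>h. D (h # vs) x)) (at x)"
begin

lemma linear_comb_head:
  "D ((a *\<^sub>R h + b *\<^sub>R k) # vs) x = a *\<^sub>R D (h # vs) x + b *\<^sub>R D (k # vs) x"
  using linear_add[OF has_derivative_linear[OF has_derivative_tower]]
    linear_scale[OF has_derivative_linear[OF has_derivative_tower]]
  by simp

lemma linear_comb_second:
  "D (g # (a *\<^sub>R h + b *\<^sub>R k) # vs) x = a *\<^sub>R D (g # h # vs) x + b *\<^sub>R D (g # k # vs) x"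
proof -
  have "D ((a *\<^sub>R h + b *\<^sub>R k) # vs) = (\<lambda>y. a *\<^sub>R D (h # vs) y + b *\<^sub>R D (k # vs) y)"
    using linear_comb_head by auto
  hence "(D ((a *\<^sub>R h + b *\<^sub>R k) # vs) has_derivative
          (\<lambda>g. a *\<^sub>R D (g # h # vs) x + b *\<^sub>R D (g # k # vs) x)) (at x)"
    by (simp add: has_derivative_add has_derivative_scaleR_right has_derivative_tower)
  from has_derivative_unique[OF has_derivative_tower this] show ?thesis by (rule fun_cong)
qed

lemma has_vector_derivative_line:
  "((\<lambda>\<tau>. D vs (y + \<tau> *\<^sub>R h)) has_vector_derivative D (h # vs) (y + \<tau> *\<^sub>R h)) (at \<tau>)"
proof -
  have "((\<lambda>\<tau>. y + \<tau> *\<^sub>R h) has_derivative (\<lambda>d. d *\<^sub>R h)) (at \<tau>)"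
    by (auto intro!: derivative_eq_intros)
  from has_derivative_compose[OF this has_derivative_tower[of vs]] show ?thesis
    using linear_comb_head[of _ h 0 h vs] by (simp add: has_vector_derivative_def)
qed

lemma has_real_derivative_inner_line:
  "((\<lambda>\<tau>. a \<bullet> D vs (y + \<tau> *\<^sub>R h)) has_real_derivative a \<bullet> D (h # vs) (y + \<tau> *\<^sub>R h)) (at \<tau>)"
  using bounded_linear.has_vector_derivative[OF bounded_linear_inner_right has_vector_derivative_line]
  by (simp add: has_real_derivative_iff_has_vector_derivative)

lemma continuous_tower: "continuous (at x) (D vs)"
  by (rule has_derivative_continuous[OF has_derivative_tower])

text \<open>The mean value theorem, applied along \<open>h\<close> and then along \<open>k\<close>.\<close>
lemma second_difference_mvt:
  assumes s: "0 < s"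
  obtains \<xi> where "dist \<xi> x \<le> s * (norm h + norm k)"
    and "a \<bullet> D [] (x + s *\<^sub>R h + s *\<^sub>R k) - a \<bullet> D [] (x + s *\<^sub>R h) - a \<bullet> D [] (x + s *\<^sub>R k)
           + a \<bullet> D [] x = s * s * (a \<bullet> D [k, h] \<xi>)"
proof -
  define \<phi> where "\<phi> \<tau> = a \<bullet> D [] ((x + s *\<^sub>R k) + \<tau> *\<^sub>R h) - a \<bullet> D [] (x + \<tau> *\<^sub>R h)" for \<tau>
  define \<phi>' where "\<phi>' \<tau> = a \<bullet> D [h] ((x + s *\<^sub>R k) + \<tau> *\<^sub>R h) - a \<bullet> D [h] (x + \<tau> *\<^sub>R h)" for \<tau>
  have "(\<phi> has_real_derivative \<phi>' \<tau>) (at \<tau>)" for \<tau>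
    unfolding \<phi>_def \<phi>'_def by (intro DERIV_diff has_real_derivative_inner_line)
  then obtain \<tau> where \<tau>: "0 < \<tau>" "\<tau> < s" "\<phi> s - \<phi> 0 = (s - 0) * \<phi>' \<tau>"
    using MVT2[of 0 s \<phi> \<phi>'] s by auto
  define \<psi> where "\<psi> \<sigma> = a \<bullet> D [h] ((x + \<tau> *\<^sub>R h) + \<sigma> *\<^sub>R k)" for \<sigma>
  define \<psi>' where "\<psi>' \<sigma> = a \<bullet> D [k, h] ((x + \<tau> *\<^sub>R h) + \<sigma> *\<^sub>R k)" for \<sigma>
  have "(\<psi> has_real_derivative \<psi>' \<sigma>) (at \<sigma>)" for \<sigma>
    unfolding \<psi>_def \<psi>'_def by (rule has_real_derivative_inner_line)
  then obtain \<sigma> where \<sigma>: "0 < \<sigma>" "\<sigma> < s" "\<psi> s - \<psi> 0 = (s - 0) * \<psi>' \<sigma>"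
    using MVT2[of 0 s \<psi> \<psi>'] s by auto
  have "\<phi>' \<tau> = \<psi> s - \<psi> 0"
    unfolding \<phi>'_def \<psi>_def by (simp add: algebra_simps)
  moreover have "\<phi> s - \<phi> 0 = a \<bullet> D [] (x + s *\<^sub>R h + s *\<^sub>R k) - a \<bullet> D [] (x + s *\<^sub>R h)
      - a \<bullet> D [] (x + s *\<^sub>R k) + a \<bullet> D [] x"
    unfolding \<phi>_def by (simp add: algebra_simps)
  moreover have "dist (x + \<tau> *\<^sub>R h + \<sigma> *\<^sub>R k) x \<le> s * (norm h + norm k)"
  proof -
    have "dist (x + \<tau> *\<^sub>R h + \<sigma> *\<^sub>R k) x \<le> \<tau> * norm h + \<sigma> * norm k"
      using norm_triangle_ineq[of "\<tau> *\<^sub>R h" "\<sigma> *\<^sub>R k"] \<tau> \<sigma> by (simp add: dist_norm)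
    also have "\<dots> \<le> s * norm h + s * norm k"
      using \<tau> \<sigma> by (intro add_mono mult_right_mono) auto
    finally show ?thesis by (simp add: distrib_left)
  qed
  ultimately show ?thesis
    using \<tau>(3) \<sigma>(3) that[of "x + \<tau> *\<^sub>R h + \<sigma> *\<^sub>R k"] by (simp add: \<psi>'_def)
qed

text \<open>Both mixed derivatives are limits of the same second difference quotient.\<close>
lemma mixed_derivatives_close:
  assumes e: "e > 0"
  shows "\<bar>a \<bullet> D [h, k] x - a \<bullet> D [k, h] x\<bar> \<le> 2 * e"
proof -
  have cont: "continuous (at x) (\<lambda>p. a \<bullet> D vs p)" for vs
    by (intro continuous_intros continuous_tower)
  obtain d1 where d1: "d1 > 0" "\<And>p. dist p x < d1 \<Longrightarrow> dist (a \<bullet> D [k, h] p) (a \<bullet> D [k, h] x) < e"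
    using cont[unfolded continuous_at_eps_delta] e by blast
  obtain d2 where d2: "d2 > 0" "\<And>p. dist p x < d2 \<Longrightarrow> dist (a \<bullet> D [h, k] p) (a \<bullet> D [h, k] x) < e"
    using cont[unfolded continuous_at_eps_delta] e by blast
  define s where "s = min d1 d2 / (norm h + norm k + 1)"
  have N: "0 < norm h + norm k + 1" by (simp add: add_nonneg_pos)
  hence s: "0 < s" using d1 d2 by (simp add: s_def)
  have "s * (norm h + norm k) < s * (norm h + norm k + 1)" using s by simp
  also have "\<dots> = min d1 d2" using N by (simp add: s_def)
  finally have s_small: "s * (norm h + norm k) < min d1 d2" .
  obtain \<xi>1 where \<xi>1: "dist \<xi>1 x \<le> s * (norm h + norm k)"
    "a \<bullet> D [] (x + s *\<^sub>R h + s *\<^sub>R k) - a \<bullet> D [] (x + s *\<^sub>R h) - a \<bullet> D [] (x + s *\<^sub>R k)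
       + a \<bullet> D [] x = s * s * (a \<bullet> D [k, h] \<xi>1)"
    using second_difference_mvt[OF s] by blast
  obtain \<xi>2 where \<xi>2: "dist \<xi>2 x \<le> s * (norm k + norm h)"
    "a \<bullet> D [] (x + s *\<^sub>R k + s *\<^sub>R h) - a \<bullet> D [] (x + s *\<^sub>R k) - a \<bullet> D [] (x + s *\<^sub>R h)
       + a \<bullet> D [] x = s * s * (a \<bullet> D [h, k] \<xi>2)"
    using second_difference_mvt[OF s] by blast
  have comm: "x + s *\<^sub>R k + s *\<^sub>R h = x + s *\<^sub>R h + s *\<^sub>R k" by (simp add: algebra_simps)
  have "s * s * (a \<bullet> D [k, h] \<xi>1) = s * s * (a \<bullet> D [h, k] \<xi>2)"
    using \<xi>1(2) \<xi>2(2)[unfolded comm] by linarith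
  hence "a \<bullet> D [k, h] \<xi>1 = a \<bullet> D [h, k] \<xi>2" using s by simp
  moreover have "dist (a \<bullet> D [k, h] \<xi>1) (a \<bullet> D [k, h] x) < e"
    using d1(2) \<xi>1(1) s_small by simp
  moreover have "dist (a \<bullet> D [h, k] \<xi>2) (a \<bullet> D [h, k] x) < e"
    using d2(2) \<xi>2(1) s_small by (simp add: add.commute)
  ultimately show ?thesis by (simp add: dist_real_def)
qed

lemma mixed_symmetric: "D [h, k] x = D [k, h] x"
proof -
  have inner_eq: "a \<bullet> D [h, k] x = a \<bullet> D [k, h] x" for a
  proof -
    have "\<bar>a \<bullet> D [h, k] x - a \<bullet> D [k, h] x\<bar> \<le> e" if "e > 0" for e
      using mixed_derivatives_close[of "e / 2"] that by simp
    from dense_eq0_I[OF this] show ?thesis by simp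
  qed
  have "(D [h, k] x - D [k, h] x) \<bullet> (D [h, k] x - D [k, h] x) = 0"
    using inner_eq[of "D [h, k] x - D [k, h] x"] by (simp only: inner_diff_right)
  thus ?thesis by simp
qed

end

lemma smooth_on_UNIV_derivative_tower:
  fixes f :: "'a::real_normed_vector \<Rightarrow> 'b::real_inner"
  assumes "smooth_on UNIV f"
  obtains D where "derivative_tower D" and "D [] = f"
  using assms unfolding smooth_on_def derivative_tower_def by auto

lemma pd_derivative_tower:
  assumes "derivative_tower D"
  shows "pd (D []) i = D [axis i 1]" and "pd2 (D []) i j w = D [axis j 1, axis i 1] w"
proof -
  interpret derivative_tower D by fact
  show pd: "pd (D []) i = D [axis i 1]" for i
    by (auto simp: pd_def frechet_derivative_at[OF has_derivative_tower, symmetric])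
  show "pd2 (D []) i j w = D [axis j 1, axis i 1] w"
    by (simp add: pd2_def pd frechet_derivative_at[OF has_derivative_tower, symmetric])
qed

lemma smooth_on_UNIV_continuous:
  fixes f :: "'a::real_normed_vector \<Rightarrow> 'b::real_inner"
  assumes "smooth_on UNIV f"
  shows "continuous_on UNIV f"
proof -
  obtain D where "derivative_tower D" "D [] = f"
    using smooth_on_UNIV_derivative_tower[OF assms] .
  thus ?thesis
    by (metis continuous_at_imp_continuous_on derivative_tower.continuous_tower)
qed

lemma smooth_on_UNIV_differentiable:
  fixes f :: "'a::real_normed_vector \<Rightarrow> 'b::real_inner"
  assumes "smooth_on UNIV f"
  shows "f differentiable_on UNIV"
proof -
  obtain D where "derivative_tower D" "D [] = f"
    using smooth_on_UNIV_derivative_tower[OF assms] .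
  thus ?thesis
    by (metis derivative_tower.has_derivative_tower differentiable_def differentiable_on_def)
qed

lemma smooth_on_time_derivative:
  fixes F :: "'a::real_normed_vector \<times> real \<Rightarrow> 'b::real_normed_vector"
  assumes "smooth_on S F"
  obtains F_t where "continuous_on S F_t"
    and "\<And>w t. (w, t) \<in> S \<Longrightarrow> ((\<lambda>s. F (w, s)) has_vector_derivative F_t (w, t)) (at t)"
proof -
  obtain D where S: "open S" and D0: "\<And>x. x \<in> S \<Longrightarrow> D [] x = F x"
    and tower: "\<And>vs x. x \<in> S \<Longrightarrow> (D vs has_derivative (\<lambda>h. D (h # vs) x)) (at x)"
    using assms unfolding smooth_on_def by blast
  have "continuous_on S (D [(0, 1)])"
    using has_derivative_continuous[OF tower] by (intro continuous_at_imp_continuous_on) auto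
  moreover have "((\<lambda>s. F (w, s)) has_vector_derivative D [(0, 1)] (w, t)) (at t)"
    if wt: "(w, t) \<in> S" for w t
  proof -
    have lin: "(\<lambda>d. D [(0, d)] (w, t)) = (\<lambda>d. d *\<^sub>R D [(0, 1)] (w, t))"
    proof
      fix d
      show "D [(0, d)] (w, t) = d *\<^sub>R D [(0, 1)] (w, t)"
        using linear_scale[OF has_derivative_linear[OF tower[OF wt]], of d "(0, 1)"] by simp
    qed
    have "((\<lambda>s. (w, s)) has_derivative (\<lambda>d. (0, d))) (at t)"
      by (auto intro!: derivative_eq_intros)
    from has_derivative_compose[OF this tower[OF wt, of "[]"]]
    have deriv: "((\<lambda>s. D [] (w, s)) has_derivative (\<lambda>d. d *\<^sub>R D [(0, 1)] (w, t))) (at t)"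
      unfolding lin .
    have "open (Pair w -` S)"
      by (rule continuous_open_vimage[OF S]) (intro continuous_intros)
    hence "((\<lambda>s. F (w, s)) has_derivative (\<lambda>d. d *\<^sub>R D [(0, 1)] (w, t))) (at t)"
      by (rule has_derivative_transform_within_open[OF deriv]) (use wt D0 in auto)
    thus ?thesis by (simp add: has_vector_derivative_def)
  qed
  ultimately show ?thesis using that by blast
qed

lemma linearization_error_mvt:
  fixes g :: "real \<Rightarrow> 'a::real_inner"
  assumes s: "0 < s"
    and deriv: "\<And>\<tau>. t \<le> \<tau> \<Longrightarrow> \<tau> \<le> t + s \<Longrightarrow> (g has_vector_derivative g' \<tau>) (at \<tau>)"
  obtains \<xi> where "\<xi> \<in> {t<..<t + s}" and "norm (g (t + s) - g t - s *\<^sub>R g' t) \<le> s * norm (g' \<xi> - g' t)"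
proof -
  define h where "h = (\<lambda>\<tau>. g \<tau> - \<tau> *\<^sub>R g' t)"
  have dh: "(h has_derivative (\<lambda>x. x *\<^sub>R (g' \<tau> - g' t))) (at \<tau>)" if "t \<le> \<tau>" "\<tau> \<le> t + s" for \<tau>
  proof -
    have "((\<lambda>\<tau>. \<tau> *\<^sub>R g' t) has_vector_derivative g' t) (at \<tau>)"
      using has_vector_derivative_scaleR[OF DERIV_ident has_vector_derivative_const] by simp
    from has_vector_derivative_diff[OF deriv[OF that] this] show ?thesis
      by (simp add: h_def has_vector_derivative_def scaleR_diff_right)
  qed
  have "continuous_on {t..t + s} h"
    using has_derivative_continuous[OF dh] by (intro continuous_at_imp_continuous_on) auto
  moreover have "(h has_derivative (\<lambda>x. x *\<^sub>R (g' \<tau> - g' t))) (at \<tau>)" if "t < \<tau>" "\<tau> < t + s" for \<tau>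
    using dh that by simp
  ultimately obtain \<xi> where "\<xi> \<in> {t<..<t + s}"
      "norm (h (t + s) - h t) \<le> norm ((t + s - t) *\<^sub>R (g' \<xi> - g' t))"
    using mvt_general[of t "t + s" h "\<lambda>\<tau> x. x *\<^sub>R (g' \<tau> - g' t)"] s by auto
  moreover have "h (t + s) - h t = g (t + s) - g t - s *\<^sub>R g' t" by (simp add: h_def algebra_simps)
  moreover have "norm ((t + s - t) *\<^sub>R (g' \<xi> - g' t)) = s * norm (g' \<xi> - g' t)" using s by simp
  ultimately show ?thesis using that by auto
qed

lemma uniform_time_differentiability:
  fixes F :: "'a::metric_space \<times> real \<Rightarrow> 'b::real_inner"
  assumes W: "compact W" and cont: "continuous_on {(w, t). 0 < t} F_t"
    and deriv: "\<And>w t. 0 < t \<Longrightarrow> ((\<lambda>s. F (w, s)) has_vector_derivative F_t (w, t)) (at t)"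
    and t: "0 < t" and e: "0 < e"
  shows "\<exists>\<delta>>0. \<forall>w\<in>W. \<forall>s. 0 < s \<and> s < \<delta> \<longrightarrow>
           norm (F (w, t + s) - F (w, t) - s *\<^sub>R F_t (w, t)) \<le> e * s"
proof -
  define K where "K = W \<times> {t..t + 1}"
  have "compact K" using W by (simp add: K_def compact_Times)
  moreover have "continuous_on K F_t"
    using t by (intro continuous_on_subset[OF cont]) (auto simp: K_def)
  ultimately have "uniformly_continuous_on K F_t"
    by (rule compact_uniformly_continuous[rotated])
  then obtain d where d: "d > 0"
      "\<And>x x'. x \<in> K \<Longrightarrow> x' \<in> K \<Longrightarrow> dist x' x < d \<Longrightarrow> dist (F_t x') (F_t x) < e"
    unfolding uniformly_continuous_on_def using e by blast
  have "norm (F (w, t + s) - F (w, t) - s *\<^sub>R F_t (w, t)) \<le> e * s"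
    if w: "w \<in> W" and s: "0 < s" "s < min d 1" for w s
  proof -
    obtain \<xi> where \<xi>: "\<xi> \<in> {t<..<t + s}"
      "norm (F (w, t + s) - F (w, t) - s *\<^sub>R F_t (w, t)) \<le> s * norm (F_t (w, \<xi>) - F_t (w, t))"
      using linearization_error_mvt[of s t "\<lambda>\<tau>. F (w, \<tau>)" "\<lambda>\<tau>. F_t (w, \<tau>)"] deriv s(1) t by auto
    have "dist (F_t (w, \<xi>)) (F_t (w, t)) < e"
      using d(2)[of "(w, t)" "(w, \<xi>)"] \<xi>(1) w s
      by (auto simp: K_def dist_Pair_Pair dist_real_def)
    hence "s * norm (F_t (w, \<xi>) - F_t (w, t)) \<le> s * e"
      using s(1) by (intro mult_left_mono) (auto simp: dist_norm)
    thus ?thesis using \<xi>(2) by (simp add: mult.commute)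
  qed
  moreover have "min d 1 > 0" using d(1) by simp
  ultimately show ?thesis by blast
qed

section \<open>The charts of the sphere\<close>

lemma norm_stereographic:
  fixes w :: "real^2"
  defines "s \<equiv> (w$1)\<^sup>2 + (w$2)\<^sup>2"
  assumes z: "z\<^sup>2 = (s - 1)\<^sup>2"
  shows "norm (vector [2 * w$1 / (1 + s), 2 * w$2 / (1 + s), z / (1 + s)] :: real^3) = 1"
    (is "norm ?v = 1")
proof -
  have s: "1 + s > 0" unfolding s_def by (simp add: add_pos_nonneg)
  have "?v \<bullet> ?v = (4 * s + z\<^sup>2) / (1 + s)\<^sup>2"
    by (simp add: inner_vec_def sum_3 power2_eq_square s_def add_divide_distrib algebra_simps)
  also have "4 * s + z\<^sup>2 = (1 + s)\<^sup>2" using z by (simp add: power2_eq_square algebra_simps)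
  finally show ?thesis using s by (simp add: norm_eq_1)
qed

lemma chartN_S2: "chartN w \<in> S2"
  using norm_stereographic[of "(w$1)\<^sup>2 + (w$2)\<^sup>2 - 1" w] by (simp add: chartN_def Let_def)

lemma chartS_S2: "chartS w \<in> S2"
  using norm_stereographic[of "1 - ((w$1)\<^sup>2 + (w$2)\<^sup>2)" w]
  by (simp add: chartS_def Let_def power2_commute)

lemma charts_S2: "\<sigma> \<in> charts \<Longrightarrow> \<sigma> w \<in> S2"
  using chartN_S2 chartS_S2 by (auto simp: charts_def)

lemma chartN_covers_lower_hemisphere:
  assumes p: "p \<in> S2" and p3: "p$3 \<le> 0"
  obtains w where "norm w \<le> 1" and "chartN w = p"
proof -
  have p1: "(p$1)\<^sup>2 + (p$2)\<^sup>2 + (p$3)\<^sup>2 = 1"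
    using p unfolding mem_sphere_0 norm_eq_1 by (simp add: inner_vec_def sum_3 power2_eq_square)
  define d where "d = 1 - p$3"
  have d: "d \<ge> 1" using p3 by (simp add: d_def)
  define w :: "real^2" where "w = vector [p$1 / d, p$2 / d]"
  have "(w$1)\<^sup>2 + (w$2)\<^sup>2 = ((p$1)\<^sup>2 + (p$2)\<^sup>2) / d\<^sup>2"
    by (simp add: w_def power_divide add_divide_distrib)
  also have "\<dots> = ((1 + p$3) * d) / (d * d)"
    using p1 by (simp add: d_def power2_eq_square algebra_simps)
  finally have s: "(w$1)\<^sup>2 + (w$2)\<^sup>2 = (1 + p$3) / d" using d by simp
  have "1 + (1 + p$3) / d = 2 / d" using d by (simp add: d_def field_simps)
  hence "chartN w = p"
    unfolding chartN_def Let_def s using d by (auto simp: vec_eq_iff forall_3 w_def field_simps d_def)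
  moreover have "(norm w)\<^sup>2 \<le> 1"
  proof -
    have "(norm w)\<^sup>2 = (w$1)\<^sup>2 + (w$2)\<^sup>2"
      unfolding power2_norm_eq_inner by (simp add: inner_vec_def sum_2 power2_eq_square)
    also have "\<dots> \<le> 1" using s d p3 by (simp add: d_def divide_le_eq)
    finally show ?thesis .
  qed
  ultimately show ?thesis using that by (simp add: power_le_one_iff)
qed

text \<open>The closed unit disc suffices: this is what makes the chart domains compact.\<close>
lemma charts_cover:
  assumes p: "p \<in> S2"
  shows "\<exists>\<sigma>\<in>charts. \<exists>w. norm w \<le> 1 \<and> \<sigma> w = p"
proof (cases "p$3 \<le> 0")
  case True
  thus ?thesis using chartN_covers_lower_hemisphere[OF p] by (metis charts_def insertI1)
next
  case False
  define reflect :: "real^3 \<Rightarrow> real^3" where "reflect x = vector [x$1, x$2, - x$3]" for x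
  have reflect_chartN: "reflect (chartN w) = chartS w" for w
    by (simp add: reflect_def chartN_def chartS_def Let_def vec_eq_iff forall_3 minus_divide_left)
  have "norm (reflect p) = norm p"
    by (simp add: norm_eq_sqrt_inner inner_vec_def sum_3 reflect_def)
  with p False obtain w where "norm w \<le> 1" "chartN w = reflect p"
    using chartN_covers_lower_hemisphere[of "reflect p"] by (force simp: reflect_def)
  moreover have "reflect (reflect p) = p" by (simp add: reflect_def vec_eq_iff forall_3)
  ultimately show ?thesis using reflect_chartN by (metis charts_def insertCI)
qed

section \<open>Convex bodies\<close>

lemma connected_subset_inside:
  assumes "connected T" "T \<inter> S = {}" "x \<in> T" "x \<in> inside S"
  shows "T \<subseteq> inside S"
proof
  fix y assume y: "y \<in> T"
  have "T \<subseteq> connected_component_set (- S) x"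
    using assms by (intro connected_component_maximal) auto
  hence "connected_component_set (- S) y = connected_component_set (- S) x"
    using y by (intro connected_component_eq) auto
  thus "y \<in> inside S" using y assms by (auto simp: inside_def)
qed

lemma inside_ray_meets:
  fixes x e :: "'a::real_normed_vector"
  assumes x: "x \<in> inside S" and e: "e \<noteq> 0"
  obtains l where "l \<ge> 0" and "x + l *\<^sub>R e \<in> S"
proof -
  define R where "R = (\<lambda>l. x + l *\<^sub>R e) ` {0..}"
  have R: "connected R" "x \<in> R"
    unfolding R_def by (auto intro!: connected_continuous_image continuous_intros image_eqI[of _ _ 0]
        simp: is_interval_connected)
  show ?thesis
  proof (rule ccontr)
    assume "\<not> thesis"
    hence "R \<inter> S = {}" using that by (auto simp: R_def)
    hence "R \<subseteq> connected_component_set (- S) x"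
      using R by (intro connected_component_maximal) auto
    hence "bounded R" using x bounded_subset by (auto simp: inside_def)
    then obtain B where B: "\<And>y. y \<in> R \<Longrightarrow> norm y \<le> B" by (auto simp: bounded_iff)
    define l where "l = (B + norm x + 1) / norm e"
    have Bx: "0 \<le> B + norm x + 1" using B[OF R(2)] norm_ge_zero[of x] by linarith
    hence "x + l *\<^sub>R e \<in> R" using e by (auto simp: R_def l_def)
    moreover have "norm (l *\<^sub>R e) = B + norm x + 1" using Bx e by (simp add: l_def)
    ultimately show False
      using B norm_triangle_ineq4[of "x + l *\<^sub>R e" x] by force
  qed
qed

lemma inside_if_not_separated:
  fixes M :: "'a::euclidean_space set"
  assumes "compact M" "convex (M \<union> inside M)" "c \<notin> M"
    and surround: "\<And>e. norm e = 1 \<Longrightarrow> \<exists>y\<in>M. e \<bullet> (y - c) > 0"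
  shows "c \<in> inside M"
proof -
  have "c \<in> convex hull M"
  proof (rule ccontr)
    assume nc: "c \<notin> convex hull M"
    have "closed (convex hull M)" using assms(1) by (simp add: compact_convex_hull compact_imp_closed)
    then obtain a b where ab: "a \<bullet> c < b" "\<And>x. x \<in> convex hull M \<Longrightarrow> a \<bullet> x > b"
      using separating_hyperplane_closed_point[OF convex_convex_hull _ nc] by blast
    have "a \<noteq> 0"
      using surround[of "SOME i. i \<in> Basis"] ab hull_inc[of _ M convex] by (force simp: SOME_Basis)
    hence "norm (- (1 / norm a) *\<^sub>R a) = 1" by simp
    then obtain y where y: "y \<in> M" "(- (1 / norm a) *\<^sub>R a) \<bullet> (y - c) > 0" using surround by blast
    hence "a \<bullet> y < a \<bullet> c"
      using \<open>a \<noteq> 0\<close> by (simp add: inner_diff_right divide_simps)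
    thus False using ab y(1) hull_inc[of y M convex] by fastforce
  qed
  moreover have "convex hull M \<subseteq> M \<union> inside M"
    using assms(2) by (intro hull_minimal) auto
  ultimately show ?thesis using assms(3) by auto
qed

lemma unit_normal_unique_up_to_sign:
  fixes a b x z :: "real^3"
  assumes "cross3 a b \<noteq> 0" "norm x = 1" "norm z = 1"
    "x \<bullet> a = 0" "x \<bullet> b = 0" "z \<bullet> a = 0" "z \<bullet> b = 0"
  shows "z = x \<or> z = - x"
proof -
  have parallel: "\<exists>l. y = l *\<^sub>R cross3 a b" if "y \<bullet> a = 0" "y \<bullet> b = 0" for y
  proof -
    have "cross3 (cross3 a b) y = (a \<bullet> y) *\<^sub>R b - (b \<bullet> y) *\<^sub>R a"
      by (simp add: cross3_simps forall_3)
    hence "collinear {0, cross3 a b, y}" using that by (simp add: inner_commute cross_eq_0)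
    thus ?thesis using assms(1) by (auto simp: collinear_lemma)
  qed
  obtain l m where "x = l *\<^sub>R cross3 a b" "z = m *\<^sub>R cross3 a b" using parallel assms by metis
  moreover from this have "\<bar>l\<bar> = \<bar>m\<bar>"
    using assms(1-3) by (metis norm_scaleR mult_right_cancel norm_eq_zero)
  ultimately show ?thesis by (auto simp: abs_eq_iff)
qed

text \<open>The ball \<open>ball c r\<close> touches the boundary at \<open>y0\<close>, so the only supporting plane there is
  the one orthogonal to \<open>y0 - c\<close>.\<close>
lemma nearest_boundary_point_radial_support:
  fixes C :: "'a::euclidean_space set"
  assumes C: "convex C" and ball: "ball c r \<subseteq> C" and r: "0 < r"
    and y0: "y0 \<in> closure C" "y0 \<notin> interior C" "norm (y0 - c) = r"
    and y: "y \<in> closure C"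
  shows "(y0 - c) \<bullet> y \<le> (y0 - c) \<bullet> y0"
proof -
  define u where "u = (1 / r) *\<^sub>R (y0 - c)"
  have u: "norm u = 1" "y0 = c + r *\<^sub>R u" using r y0(3) by (auto simp: u_def)
  have "c \<in> interior C" using ball r by (auto simp: mem_interior)
  hence "rel_interior C = interior C" by (intro rel_interior_nonempty_interior) auto
  then obtain a where a: "a \<noteq> 0" and support: "\<And>y. y \<in> closure C \<Longrightarrow> a \<bullet> y0 \<le> a \<bullet> y"
    using supporting_hyperplane_relative_frontier[OF C y0(1)] y0(2) by metis
  define v where "v = - (1 / norm a) *\<^sub>R a"
  have v: "norm v = 1" using a by (simp add: v_def)
  have v_support: "v \<bullet> y \<le> v \<bullet> y0" if "y \<in> closure C" for y
    using divide_right_mono[OF support[OF that], of "norm a"] by (simp add: v_def)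
  have "closure (ball c r) \<subseteq> closure C" using ball by (rule closure_mono)
  hence "c + r *\<^sub>R v \<in> closure C" using v r by (auto simp: dist_norm)
  from v_support[OF this] have "r * (v \<bullet> v) \<le> r * (v \<bullet> u)"
    by (simp add: u(2) inner_add_right)
  hence "1 \<le> v \<bullet> u" using r v by (simp add: dot_square_norm)
  moreover have "(norm (v - u))\<^sup>2 = v \<bullet> v - 2 * (v \<bullet> u) + u \<bullet> u"
    unfolding power2_norm_eq_inner by (simp add: inner_diff_left inner_diff_right inner_commute)
  moreover have "v \<bullet> v = 1" "u \<bullet> u = 1" using u(1) v by (simp_all add: dot_square_norm)
  ultimately have "(norm (v - u))\<^sup>2 \<le> 0" by simp
  hence "v = u" by simp
  hence "u \<bullet> y \<le> u \<bullet> y0" using v_support[OF y] by simp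
  thus ?thesis using r by (simp add: u_def divide_le_cancel)
qed

section \<open>Curvature at a nearest point\<close>

lemma has_real_derivative_inner:
  fixes f g :: "real \<Rightarrow> 'a::real_inner"
  assumes "(f has_vector_derivative f') (at s)" "(g has_vector_derivative g') (at s)"
  shows "((\<lambda>s. f s \<bullet> g s) has_real_derivative f s \<bullet> g' + f' \<bullet> g s) (at s)"
proof -
  have "(\<lambda>d. f s \<bullet> (d *\<^sub>R g') + (d *\<^sub>R f') \<bullet> g s) = (*) (f s \<bullet> g' + f' \<bullet> g s)"
    by (rule ext) (simp add: algebra_simps)
  thus ?thesis
    using has_derivative_inner[OF assms[unfolded has_vector_derivative_def]]
    by (simp add: has_field_derivative_def)
qed

context derivative_tower
begin

lemma derivative_of_constant_component:
  assumes "\<And>w. a \<bullet> D vs w = b"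
  shows "a \<bullet> D (h # vs) w = 0"
  using DERIV_unique[OF has_real_derivative_inner_line[of a vs w h 0]] assms by simp

lemma second_derivative_diag_comb:
  "D [x *\<^sub>R e1 + y *\<^sub>R e2, x *\<^sub>R e1 + y *\<^sub>R e2] w
     = (x * x) *\<^sub>R D [e1, e1] w + (2 * x * y) *\<^sub>R D [e2, e1] w + (y * y) *\<^sub>R D [e2, e2] w"
proof -
  have "(x * y) *\<^sub>R D [e2, e1] w + (x * y) *\<^sub>R D [e2, e1] w = (2 * x * y) *\<^sub>R D [e2, e1] w"
    by (simp flip: scaleR_left_distrib)
  thus ?thesis
    using linear_comb_head[of x e1 y e2 "[x *\<^sub>R e1 + y *\<^sub>R e2]" w]
      linear_comb_second[of e1 x e1 y e2 "[]" w] linear_comb_second[of e2 x e1 y e2 "[]" w]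
      mixed_symmetric[of e1 e2 w]
    by (simp add: scaleR_add_right algebra_simps)
qed

lemma inner_second_derivative_comb:
  "u \<bullet> D [x *\<^sub>R e1 + y *\<^sub>R e2, x *\<^sub>R e1 + y *\<^sub>R e2] w
     = (u \<bullet> D [e1, e1] w) * x\<^sup>2 + 2 * (u \<bullet> D [e2, e1] w) * x * y + (u \<bullet> D [e2, e2] w) * y\<^sup>2"
  by (simp add: second_derivative_diag_comb inner_add_right power2_eq_square)

lemma first_derivative_comb_sq:
  "D [x *\<^sub>R e1 + y *\<^sub>R e2] w \<bullet> D [x *\<^sub>R e1 + y *\<^sub>R e2] w
     = (D [e1] w \<bullet> D [e1] w) * x\<^sup>2 + 2 * (D [e1] w \<bullet> D [e2] w) * x * y + (D [e2] w \<bullet> D [e2] w) * y\<^sup>2"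
  using linear_comb_head[of x e1 y e2 "[]" w]
  by (simp add: inner_add_left inner_add_right inner_commute power2_eq_square algebra_simps)

lemma second_order_at_nearest_point:
  assumes Y0: "D [] w0 = c + r *\<^sub>R u" and u: "norm u = 1" and r: "0 \<le> r"
    and support: "\<And>w. u \<bullet> D [] w \<le> u \<bullet> D [] w0"
    and nearest: "\<And>w. r \<le> norm (D [] w - c)"
  shows "u \<bullet> D [v] w0 = 0" and "u \<bullet> D [v, v] w0 \<le> 0"
    and "0 \<le> D [v] w0 \<bullet> D [v] w0 + r * (u \<bullet> D [v, v] w0)"
proof -
  have height: "((\<lambda>s. - (u \<bullet> D vs (w0 + s *\<^sub>R v))) has_real_derivative
                   - (u \<bullet> D (v # vs) (w0 + s *\<^sub>R v))) (at s)" for vs s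
    by (intro DERIV_minus has_real_derivative_inner_line)
  have "- (u \<bullet> D [] (w0 + 0 *\<^sub>R v)) \<le> - (u \<bullet> D [] (w0 + s *\<^sub>R v))" for s
    using support[of "w0 + s *\<^sub>R v"] by simp
  note max_height = derivatives_at_global_min[OF height height[of "[v]" 0] this]
  show "u \<bullet> D [v] w0 = 0" using max_height(1) by simp
  show "u \<bullet> D [v, v] w0 \<le> 0" using max_height(2) by simp
  have line: "((\<lambda>s. D [] (w0 + s *\<^sub>R v) - c) has_vector_derivative D [v] (w0 + s *\<^sub>R v)) (at s)"
    for s using has_vector_derivative_diff[OF has_vector_derivative_line has_vector_derivative_const]
    by simp
  have dist2: "((\<lambda>s. (D [] (w0 + s *\<^sub>R v) - c) \<bullet> (D [] (w0 + s *\<^sub>R v) - c)) has_real_derivative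
      2 * ((D [] (w0 + s *\<^sub>R v) - c) \<bullet> D [v] (w0 + s *\<^sub>R v))) (at s)" for s
    using has_real_derivative_inner[OF line line] by (simp add: inner_commute)
  have dist2': "((\<lambda>s. 2 * ((D [] (w0 + s *\<^sub>R v) - c) \<bullet> D [v] (w0 + s *\<^sub>R v))) has_real_derivative
      2 * ((D [] (w0 + 0 *\<^sub>R v) - c) \<bullet> D [v, v] (w0 + 0 *\<^sub>R v)
        + D [v] (w0 + 0 *\<^sub>R v) \<bullet> D [v] (w0 + 0 *\<^sub>R v))) (at 0)"
    by (intro DERIV_cmult has_real_derivative_inner line has_vector_derivative_line)
  have "(D [] w0 - c) \<bullet> (D [] w0 - c) = r\<^sup>2"
    using u by (simp add: Y0 power2_eq_square dot_square_norm)
  moreover have "r\<^sup>2 \<le> (norm (D [] (w0 + s *\<^sub>R v) - c))\<^sup>2" for s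
    using nearest r by (simp add: power_mono)
  ultimately have "(D [] (w0 + 0 *\<^sub>R v) - c) \<bullet> (D [] (w0 + 0 *\<^sub>R v) - c)
      \<le> (D [] (w0 + s *\<^sub>R v) - c) \<bullet> (D [] (w0 + s *\<^sub>R v) - c)" for s
    by (simp add: power2_norm_eq_inner)
  from derivatives_at_global_min(2)[OF dist2 dist2' this]
  show "0 \<le> D [v] w0 \<bullet> D [v] w0 + r * (u \<bullet> D [v, v] w0)"
    by (simp add: Y0 inner_add_left)
qed

end

lemma psd_form2_coeffs:
  fixes p q r :: real
  assumes psd: "\<And>x y. 0 \<le> p * x\<^sup>2 + 2 * q * x * y + r * y\<^sup>2"
  shows "0 \<le> p" "0 \<le> r" "q\<^sup>2 \<le> p * r"
proof -
  show p: "0 \<le> p" using psd[of 1 0] by simp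
  show "0 \<le> r" using psd[of 0 1] by simp
  show "q\<^sup>2 \<le> p * r"
  proof (cases "p = 0")
    case True
    have "q = 0"
    proof (rule ccontr)
      assume "q \<noteq> 0"
      have "0 \<le> p * (- (r + 1) / (2 * q))\<^sup>2 + 2 * q * (- (r + 1) / (2 * q)) * 1 + r * 1\<^sup>2"
        by (rule psd)
      also have "\<dots> = -1" using True \<open>q \<noteq> 0\<close> by (simp add: field_simps)
      finally show False by simp
    qed
    thus ?thesis using True by simp
  next
    case False
    have "0 \<le> p * (- q)\<^sup>2 + 2 * q * (- q) * p + r * p\<^sup>2" by (rule psd)
    hence "0 \<le> p * (p * r - q\<^sup>2)" by (simp add: power2_eq_square algebra_simps)
    thus ?thesis using p False by (simp add: zero_le_mult_iff)
  qed
qed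

lemma psd_form2_det_mono:
  fixes a b c p q r :: real
  assumes P: "\<And>x y. 0 \<le> p * x\<^sup>2 + 2 * q * x * y + r * y\<^sup>2"
    and Q: "\<And>x y. 0 \<le> (a - p) * x\<^sup>2 + 2 * (b - q) * x * y + (c - r) * y\<^sup>2"
  shows "p * r - q\<^sup>2 \<le> a * c - b\<^sup>2"
proof -
  define \<alpha> \<beta> \<gamma> where "\<alpha> = a - p" "\<beta> = b - q" "\<gamma> = c - r"
  have P': "0 \<le> p" "0 \<le> r" "q\<^sup>2 \<le> p * r" using psd_form2_coeffs[OF P] by auto
  have Q': "0 \<le> \<alpha>" "0 \<le> \<gamma>" "\<beta>\<^sup>2 \<le> \<alpha> * \<gamma>"
    using psd_form2_coeffs[of \<alpha> \<beta> \<gamma>] Q unfolding \<alpha>_\<beta>_\<gamma>_def by auto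
  have "q\<^sup>2 * \<beta>\<^sup>2 \<le> (p * r) * (\<alpha> * \<gamma>)"
    using P' Q' by (intro mult_mono) auto
  hence "(2 * q * \<beta>)\<^sup>2 \<le> 4 * (p * r) * (\<alpha> * \<gamma>)"
    by (simp add: power_mult_distrib)
  also have "\<dots> \<le> (p * \<gamma> + \<alpha> * r)\<^sup>2"
  proof -
    have "0 \<le> (p * \<gamma> - \<alpha> * r)\<^sup>2" by simp
    thus ?thesis by (simp add: power2_eq_square algebra_simps)
  qed
  finally have "(2 * q * \<beta>)\<^sup>2 \<le> (p * \<gamma> + \<alpha> * r)\<^sup>2" .
  moreover have "0 \<le> p * \<gamma> + \<alpha> * r" using P' Q' by simp
  ultimately have "2 * q * \<beta> \<le> p * \<gamma> + \<alpha> * r" by (rule power2_le_imp_le)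
  hence "p * r - q\<^sup>2 \<le> (p + \<alpha>) * (r + \<gamma>) - (q + \<beta>)\<^sup>2"
    using Q'(3) by (simp add: power2_eq_square algebra_simps)
  thus ?thesis unfolding \<alpha>_\<beta>_\<gamma>_def by simp
qed

lemma gauss_curv_chart_unit_normal:
  assumes nondeg: "cross3 (pd Y 1 w) (pd Y 2 w) \<noteq> 0"
    and u: "norm u = 1" "u \<bullet> pd Y 1 w = 0" "u \<bullet> pd Y 2 w = 0"
  shows "gauss_curv_chart Y w =
    ((pd2 Y 1 1 w \<bullet> u) * (pd2 Y 2 2 w \<bullet> u) - (pd2 Y 1 2 w \<bullet> u)\<^sup>2) /
    (pd Y 1 w \<bullet> pd Y 1 w * (pd Y 2 w \<bullet> pd Y 2 w) - (pd Y 1 w \<bullet> pd Y 2 w)\<^sup>2)"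
proof -
  define N where "N = (1 / norm (cross3 (pd Y 1 w) (pd Y 2 w))) *\<^sub>R cross3 (pd Y 1 w) (pd Y 2 w)"
  have "norm N = 1" "N \<bullet> pd Y 1 w = 0" "N \<bullet> pd Y 2 w = 0"
    using nondeg by (simp_all add: N_def dot_cross_self)
  hence "N = u \<or> N = - u" using unit_normal_unique_up_to_sign[OF nondeg u(1)] u by blast
  thus ?thesis unfolding gauss_curv_chart_def Let_def N_def[symmetric] by auto
qed

lemma gram_det_pos:
  fixes a b :: "real^3"
  assumes "cross3 a b \<noteq> 0"
  shows "0 < (a \<bullet> a) * (b \<bullet> b) - (a \<bullet> b)\<^sup>2"
proof -
  have "(norm (cross3 a b))\<^sup>2 + (a \<bullet> b)\<^sup>2 = (a \<bullet> a) * (b \<bullet> b)"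
    unfolding norm_cross_dot by (simp add: power_mult_distrib dot_square_norm)
  moreover have "0 < (norm (cross3 a b))\<^sup>2" using assms by simp
  ultimately show ?thesis by linarith
qed

lemma curvature_bound_at_nearest_point:
  fixes D :: "(real^2) list \<Rightarrow> real^2 \<Rightarrow> real^3"
  assumes tower: "derivative_tower D"
    and nondeg: "cross3 (pd (D []) 1 w0) (pd (D []) 2 w0) \<noteq> 0"
    and u: "norm u = 1" and r: "0 < r" and Y0: "D [] w0 = c + r *\<^sub>R u"
    and support: "\<And>w. u \<bullet> D [] w \<le> u \<bullet> D [] w0"
    and nearest: "\<And>w. r \<le> norm (D [] w - c)"
  shows "gauss_curv_chart (D []) w0 * r\<^sup>2 \<le> 1"
proof -
  interpret derivative_tower D by fact
  note order = second_order_at_nearest_point[OF Y0 u less_imp_le[OF r] support nearest]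
  define e1 e2 :: "real^2" where "e1 = axis 1 1" and "e2 = axis 2 1"
  define E F G where "E = D [e1] w0 \<bullet> D [e1] w0" and "F = D [e1] w0 \<bullet> D [e2] w0"
    and "G = D [e2] w0 \<bullet> D [e2] w0"
  define l m n where "l = u \<bullet> D [e1, e1] w0" and "m = u \<bullet> D [e2, e1] w0"
    and "n = u \<bullet> D [e2, e2] w0"
  have "0 \<le> (- (r * l)) * x\<^sup>2 + 2 * (- (r * m)) * x * y + (- (r * n)) * y\<^sup>2" for x y
  proof -
    have "r * (l * x\<^sup>2 + 2 * m * x * y + n * y\<^sup>2) \<le> 0"
      using order(2)[of "x *\<^sub>R e1 + y *\<^sub>R e2"] r
      by (simp add: inner_second_derivative_comb l_def m_def n_def mult_nonneg_nonpos)
    thus ?thesis by (simp add: algebra_simps)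
  qed
  moreover have "0 \<le> (E - - (r * l)) * x\<^sup>2 + 2 * (F - - (r * m)) * x * y + (G - - (r * n)) * y\<^sup>2"
    for x y
    using order(3)[of "x *\<^sub>R e1 + y *\<^sub>R e2"]
    by (simp add: inner_second_derivative_comb first_derivative_comb_sq E_def F_def G_def
        l_def m_def n_def algebra_simps)
  ultimately have "(- (r * l)) * (- (r * n)) - (- (r * m))\<^sup>2 \<le> E * G - F\<^sup>2"
    by (rule psd_form2_det_mono)
  hence "r\<^sup>2 * (l * n - m\<^sup>2) \<le> E * G - F\<^sup>2"
    by (simp add: power2_eq_square algebra_simps)
  moreover have pd: "pd (D []) 1 w0 = D [e1] w0" "pd (D []) 2 w0 = D [e2] w0"
    "pd2 (D []) 1 1 w0 = D [e1, e1] w0" "pd2 (D []) 1 2 w0 = D [e2, e1] w0"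
    "pd2 (D []) 2 2 w0 = D [e2, e2] w0"
    by (simp_all add: pd_derivative_tower[OF tower] e1_def e2_def)
  moreover have "0 < E * G - F\<^sup>2"
    using gram_det_pos[OF nondeg] by (simp add: pd E_def F_def G_def)
  moreover have "gauss_curv_chart (D []) w0 = (l * n - m\<^sup>2) / (E * G - F\<^sup>2)"
    using gauss_curv_chart_unit_normal[OF nondeg u] order(1)[of e1] order(1)[of e2]
    by (simp add: pd E_def F_def G_def l_def m_def n_def inner_commute)
  ultimately show ?thesis by (simp add: divide_le_eq algebra_simps)
qed

section \<open>Closed strictly convex surfaces\<close>

lemma closed_strictly_convex_chart_tower:
  assumes "closed_strictly_convex \<Phi>" "\<sigma> \<in> charts"
  obtains D where "derivative_tower D" and "D [] = \<Phi> \<circ> \<sigma>"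
  using assms smooth_on_UNIV_derivative_tower unfolding closed_strictly_convex_def by metis

lemma outer_normal_not_interior:
  assumes "is_outer_normal \<Phi> \<sigma> w n"
  shows "\<Phi> (\<sigma> w) \<notin> interior (\<Phi> ` S2 \<union> inside (\<Phi> ` S2))"
proof
  let ?C = "\<Phi> ` S2 \<union> inside (\<Phi> ` S2)"
  assume "\<Phi> (\<sigma> w) \<in> interior ?C"
  then obtain e where e: "e > 0" "ball (\<Phi> (\<sigma> w)) e \<subseteq> ?C" by (auto simp: mem_interior)
  obtain b where b: "b > 0" "\<And>s. 0 < s \<Longrightarrow> s < b \<Longrightarrow> \<Phi> (\<sigma> w) + s *\<^sub>R n \<in> outside (\<Phi> ` S2)"
    using assms unfolding is_outer_normal_def eventually_at_right_field by auto
  define s where "s = min b e / 2"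
  have "\<Phi> (\<sigma> w) + s *\<^sub>R n \<in> ?C"
    using e b(1) assms by (intro subsetD[OF e(2)]) (auto simp: s_def dist_norm is_outer_normal_def)
  moreover have "\<Phi> (\<sigma> w) + s *\<^sub>R n \<in> outside (\<Phi> ` S2)" using b e(1) by (simp add: s_def)
  ultimately show False using inside_Int_outside outside_no_overlap by blast
qed

lemma nearest_point_ball_inside:
  fixes M :: "'a::real_normed_vector set"
  assumes c: "c \<in> inside M" and y0: "y0 \<in> M"
    and nearest: "\<And>y. y \<in> M \<Longrightarrow> norm (y0 - c) \<le> norm (y - c)"
  shows "0 < norm (y0 - c)" and "ball c (norm (y0 - c)) \<subseteq> inside M"
proof -
  have "y0 \<noteq> c" using c y0 inside_no_overlap[of M] by blast
  thus r: "0 < norm (y0 - c)" by simp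
  have "ball c (norm (y0 - c)) \<inter> M = {}"
    using nearest by (force simp: dist_norm norm_minus_commute)
  thus "ball c (norm (y0 - c)) \<subseteq> inside M"
    using connected_subset_inside[OF connected_ball _ _ c] r by auto
qed

lemma outer_normal_not_inward:
  assumes normal: "is_outer_normal \<Phi> \<sigma> w n" and ball: "ball c r \<subseteq> inside (\<Phi> ` S2)"
    and r: "0 < r" and u: "norm u = 1" "\<Phi> (\<sigma> w) = c + r *\<^sub>R u"
  shows "n \<noteq> - u"
proof
  assume "n = - u"
  obtain b where b: "b > 0" "\<And>s. 0 < s \<Longrightarrow> s < b \<Longrightarrow> \<Phi> (\<sigma> w) + s *\<^sub>R n \<in> outside (\<Phi> ` S2)"
    using normal unfolding is_outer_normal_def eventually_at_right_field by auto
  define s where "s = min b r / 2"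
  have "\<Phi> (\<sigma> w) + s *\<^sub>R n = c + (r - s) *\<^sub>R u" using \<open>n = - u\<close> u(2) by (simp add: algebra_simps)
  moreover have "c + (r - s) *\<^sub>R u \<in> ball c r" using r b(1) u(1) by (simp add: s_def dist_norm)
  ultimately have "\<Phi> (\<sigma> w) + s *\<^sub>R n \<in> inside (\<Phi> ` S2)" using ball by auto
  moreover have "\<Phi> (\<sigma> w) + s *\<^sub>R n \<in> outside (\<Phi> ` S2)" using b r by (simp add: s_def)
  ultimately show False using inside_Int_outside by blast
qed

lemma convex_surface_radial_support:
  assumes csc: "closed_strictly_convex \<Phi>" and normal: "is_outer_normal \<Phi> \<sigma> w n"
    and ball: "ball c r \<subseteq> inside (\<Phi> ` S2)" and r: "0 < r" "norm (\<Phi> (\<sigma> w) - c) = r"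
    and \<sigma>: "\<sigma> \<in> charts" and p: "p \<in> S2"
  shows "(\<Phi> (\<sigma> w) - c) \<bullet> \<Phi> p \<le> (\<Phi> (\<sigma> w) - c) \<bullet> \<Phi> (\<sigma> w)"
proof (rule nearest_boundary_point_radial_support[OF _ _ r(1) _ _ r(2)])
  show "convex (\<Phi> ` S2 \<union> inside (\<Phi> ` S2))" using csc by (simp add: closed_strictly_convex_def)
  show "\<Phi> (\<sigma> w) \<in> closure (\<Phi> ` S2 \<union> inside (\<Phi> ` S2))" "\<Phi> p \<in> closure (\<Phi> ` S2 \<union> inside (\<Phi> ` S2))"
    by (intro subsetD[OF closure_subset] UnI1 imageI charts_S2[OF \<sigma>] p)+
qed (use ball outer_normal_not_interior[OF normal] in auto)

text \<open>Comparison with the inscribed sphere through the nearest point: the surface lies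
  outside the ball \<open>ball c r\<close> and touches it at \<open>\<Phi> (\<sigma> w0)\<close>, so there its outer normal is
  radial and its Gauss curvature is at most that of the sphere, \<open>1 / r\<^sup>2\<close>.\<close>
lemma nearest_point_normal_and_curvature:
  fixes \<Phi> :: "real^3 \<Rightarrow> real^3"
  assumes csc: "closed_strictly_convex \<Phi>" and \<sigma>: "\<sigma> \<in> charts"
    and c: "c \<in> inside (\<Phi> ` S2)"
    and nearest: "\<And>p. p \<in> S2 \<Longrightarrow> norm (\<Phi> (\<sigma> w0) - c) \<le> norm (\<Phi> p - c)"
    and normal: "is_outer_normal \<Phi> \<sigma> w0 n"
  shows "n = (1 / norm (\<Phi> (\<sigma> w0) - c)) *\<^sub>R (\<Phi> (\<sigma> w0) - c)"
    and "gauss_curv_chart (\<Phi> \<circ> \<sigma>) w0 * (norm (\<Phi> (\<sigma> w0) - c))\<^sup>2 \<le> 1"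
proof -
  define r u where "r = norm (\<Phi> (\<sigma> w0) - c)" and "u = (1 / r) *\<^sub>R (\<Phi> (\<sigma> w0) - c)"
  have on_M: "\<Phi> (\<sigma> w) \<in> \<Phi> ` S2" for w using charts_S2[OF \<sigma>] by simp
  have "\<And>y. y \<in> \<Phi> ` S2 \<Longrightarrow> norm (\<Phi> (\<sigma> w0) - c) \<le> norm (y - c)" using nearest by blast
  note ball_inside = nearest_point_ball_inside[OF c on_M this]
  have r: "0 < r" and ball: "ball c r \<subseteq> inside (\<Phi> ` S2)"
    using ball_inside by (simp_all add: r_def)
  have u: "norm u = 1" "\<Phi> (\<sigma> w0) = c + r *\<^sub>R u" using r by (auto simp: u_def r_def)
  obtain D where tower: "derivative_tower D" and D: "D [] = \<Phi> \<circ> \<sigma>"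
    using closed_strictly_convex_chart_tower[OF csc \<sigma>] .
  have support: "u \<bullet> D [] w \<le> u \<bullet> D [] w0" for w
    using divide_right_mono[OF convex_surface_radial_support[OF csc normal ball r _ \<sigma>
        charts_S2[OF \<sigma>, of w]], of r] r by (simp add: u_def D r_def)
  have Y0: "D [] w0 = c + r *\<^sub>R u" using u(2) by (simp add: D)
  have nearest': "r \<le> norm (D [] w - c)" for w
    using nearest[OF charts_S2[OF \<sigma>]] by (simp add: D r_def)
  have nondeg: "cross3 (pd (D []) 1 w0) (pd (D []) 2 w0) \<noteq> 0"
    using csc \<sigma> by (simp add: closed_strictly_convex_def D)
  have "gauss_curv_chart (D []) w0 * r\<^sup>2 \<le> 1"
    using curvature_bound_at_nearest_point[OF tower nondeg u(1) r Y0 support nearest'] .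
  thus "gauss_curv_chart (\<Phi> \<circ> \<sigma>) w0 * (norm (\<Phi> (\<sigma> w0) - c))\<^sup>2 \<le> 1" by (simp add: D r_def)
  have "u \<bullet> pd (D []) i w0 = 0" for i
    using derivative_tower.second_order_at_nearest_point(1)[OF tower Y0 u(1) less_imp_le[OF r]
        support nearest']
    by (simp add: pd_derivative_tower[OF tower])
  hence "n = u \<or> n = - u"
    using unit_normal_unique_up_to_sign[OF nondeg u(1)] normal
    by (simp add: is_outer_normal_def D inner_commute)
  thus "n = (1 / norm (\<Phi> (\<sigma> w0) - c)) *\<^sub>R (\<Phi> (\<sigma> w0) - c)"
    using outer_normal_not_inward[OF normal ball r u] by (simp add: u_def r_def)
qed

text \<open>A planar parametrisation has vanishing second fundamental form, hence zero Gauss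
  curvature.\<close>
lemma closed_strictly_convex_not_planar:
  assumes csc: "closed_strictly_convex \<Phi>" and a: "a \<noteq> 0"
  shows "\<not> \<Phi> ` S2 \<subseteq> {x. a \<bullet> x = b}"
proof
  assume planar: "\<Phi> ` S2 \<subseteq> {x. a \<bullet> x = b}"
  obtain D where tower: "derivative_tower D" and D: "D [] = \<Phi> \<circ> chartN"
    using closed_strictly_convex_chart_tower[OF csc] by (auto simp: charts_def)
  interpret derivative_tower D by fact
  have "a \<bullet> D [] w = b" for w
    using subsetD[OF planar imageI[OF chartN_S2[of w]]] by (simp add: D)
  hence first: "a \<bullet> D [h] w = 0" for h w by (rule derivative_of_constant_component)
  hence second: "a \<bullet> D [h, k] w = 0" for h k w by (rule derivative_of_constant_component)
  define u where "u = (1 / norm a) *\<^sub>R a"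
  have u: "norm u = 1" "u \<bullet> pd (D []) 1 0 = 0" "u \<bullet> pd (D []) 2 0 = 0"
    using a first by (simp_all add: u_def pd_derivative_tower[OF tower])
  have nondeg: "cross3 (pd (D []) 1 0) (pd (D []) 2 0) \<noteq> 0"
    and "gauss_curv_chart (D []) 0 > 0"
    using csc by (simp_all add: closed_strictly_convex_def charts_def D)
  have "pd2 (D []) i j 0 \<bullet> u = 0" for i j
    using second by (simp add: u_def pd_derivative_tower[OF tower] inner_commute)
  hence "gauss_curv_chart (D []) 0 = 0"
    by (simp add: gauss_curv_chart_unit_normal[OF nondeg u])
  thus False using \<open>gauss_curv_chart (D []) 0 > 0\<close> by simp
qed

lemma closed_strictly_convex_negligible:
  assumes csc: "closed_strictly_convex \<Phi>"
  shows "negligible (\<Phi> ` S2)"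
proof -
  have "negligible (range (\<Phi> \<circ> \<sigma>))" if "\<sigma> \<in> charts" for \<sigma>
    using csc that unfolding closed_strictly_convex_def
    by (intro negligible_differentiable_image_lowdim smooth_on_UNIV_differentiable) auto
  hence "negligible (range (\<Phi> \<circ> chartN) \<union> range (\<Phi> \<circ> chartS))"
    by (simp add: charts_def)
  moreover have "\<Phi> ` S2 \<subseteq> range (\<Phi> \<circ> chartN) \<union> range (\<Phi> \<circ> chartS)"
    using charts_cover by (fastforce simp: charts_def)
  ultimately show ?thesis by (rule negligible_subset)
qed

text \<open>The convex hull of the surface has interior, since the surface is not planar, and the
  negligible surface cannot fill it.\<close>
lemma closed_strictly_convex_inside_nonempty:
  assumes csc: "closed_strictly_convex \<Phi>"
  obtains c where "c \<in> inside (\<Phi> ` S2)"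
proof -
  let ?H = "convex hull (\<Phi> ` S2)"
  have "interior ?H \<noteq> {}"
  proof
    assume "interior ?H = {}"
    then obtain a b where "a \<noteq> 0" "?H \<subseteq> {x. a \<bullet> x = b}"
      by (rule empty_interior_subset_hyperplane[OF convex_convex_hull])
    with subset_trans[OF hull_subset] closed_strictly_convex_not_planar[OF csc]
    show False by metis
  qed
  hence "\<not> negligible (interior ?H)"
    by (rule open_not_negligible[OF open_interior])
  hence "\<not> interior ?H \<subseteq> \<Phi> ` S2"
    using negligible_subset[OF closed_strictly_convex_negligible[OF csc]] by metis
  then obtain c where "c \<in> ?H" "c \<notin> \<Phi> ` S2"
    using interior_subset by blast
  moreover have "?H \<subseteq> \<Phi> ` S2 \<union> inside (\<Phi> ` S2)"
    using csc unfolding closed_strictly_convex_def by (intro hull_minimal) auto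
  ultimately show ?thesis using that by blast
qed

section \<open>The distance to an enclosed point\<close>

lemma compact_uniform_gap:
  fixes f :: "'a::topological_space \<Rightarrow> real"
  assumes "compact B" "continuous_on B f" "\<And>w. w \<in> B \<Longrightarrow> r < f w"
  shows "\<exists>\<eta>>0. \<forall>w\<in>B. r + \<eta> \<le> f w"
proof (cases "B = {}")
  case False
  then obtain w1 where w1: "w1 \<in> B" "\<And>w. w \<in> B \<Longrightarrow> f w1 \<le> f w"
    using continuous_attains_inf[OF assms(1)] assms(2) by blast
  thus ?thesis using assms(3)[OF w1(1)] by (intro exI[of _ "f w1 - r"]) auto
qed (auto intro: exI[of _ 1])

lemma norm_growth_from_radial_speed:
  fixes a b V :: "'a::real_inner"
  assumes r: "0 < r" "r \<le> norm a" and s: "0 < s"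
    and speed: "L \<le> (1 / norm a) * (a \<bullet> V)" and approx: "norm (b - s *\<^sub>R V) \<le> e * s"
  shows "r + s * (L - e) \<le> norm (a + b)"
proof -
  define u where "u = (1 / norm a) *\<^sub>R a"
  have a: "norm a > 0" using r by linarith
  hence u: "norm u = 1" by (simp add: u_def)
  have "- (e * s) \<le> u \<bullet> (b - s *\<^sub>R V)"
    using norm_cauchy_schwarz[of "- u" "b - s *\<^sub>R V"] u approx by simp
  moreover have "s * L \<le> s * ((1 / norm a) * (a \<bullet> V))" using mult_left_mono[OF speed, of s] s by simp
  moreover have "u \<bullet> (a + b) = norm a + s * ((1 / norm a) * (a \<bullet> V)) + u \<bullet> (b - s *\<^sub>R V)"
    using a by (simp add: u_def inner_add_right inner_diff_right dot_square_norm power2_eq_square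
        algebra_simps)
  moreover have "u \<bullet> (a + b) \<le> norm (a + b)" using norm_cauchy_schwarz[of u "a + b"] u by simp
  ultimately show ?thesis using r by (simp add: algebra_simps)
qed

definition min_dist :: "(real^3 \<Rightarrow> real \<Rightarrow> real^3) \<Rightarrow> real^3 \<Rightarrow> real \<Rightarrow> real" where
  "min_dist X c t = Inf ((\<lambda>p. norm (X p t - c)) ` S2)"

lemma min_dist_le: "p \<in> S2 \<Longrightarrow> min_dist X c t \<le> norm (X p t - c)"
  unfolding min_dist_def by (rule cInf_lower) (auto intro: bdd_belowI[of _ 0])

lemma min_dist_greatest:
  "(\<And>p. p \<in> S2 \<Longrightarrow> B \<le> norm (X p t - c)) \<Longrightarrow> B \<le> min_dist X c t"
  unfolding min_dist_def by (rule cInf_greatest) (auto intro: exI[of _ "axis 1 1"])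

locale continuous_motion =
  fixes X :: "real^3 \<Rightarrow> real \<Rightarrow> real^3"
  assumes continuous_motion: "continuous_on (S2 \<times> {t. 0 \<le> t}) (\<lambda>(p, t). X p t)"
begin

lemma continuous_at_time: "0 \<le> t \<Longrightarrow> continuous_on S2 (\<lambda>p. X p t)"
  by (rule continuous_on_compose2[OF continuous_motion, of _ "\<lambda>p. (p, t)", simplified])
    (auto intro!: continuous_intros)

lemma min_dist_attained:
  assumes "0 \<le> t"
  shows "\<exists>p\<in>S2. min_dist X c t = norm (X p t - c)"
proof -
  have "continuous_on S2 (\<lambda>p. norm (X p t - c))"
    by (intro continuous_intros continuous_at_time assms)
  moreover have "S2 \<noteq> {}" by (auto intro: exI[of _ "axis 1 1"])
  ultimately obtain p where "p \<in> S2" "\<And>q. q \<in> S2 \<Longrightarrow> norm (X p t - c) \<le> norm (X q t - c)"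
    using continuous_attains_inf[OF compact_sphere] by blast
  moreover from this have "min_dist X c t = norm (X p t - c)"
    unfolding min_dist_def by (intro cInf_eq_minimum) auto
  ultimately show ?thesis by blast
qed

lemma min_dist_pos:
  assumes t: "0 \<le> t" and c: "c \<in> inside ((\<lambda>p. X p t) ` S2)"
  shows "0 < min_dist X c t"
proof -
  obtain p where p: "p \<in> S2" "min_dist X c t = norm (X p t - c)"
    using min_dist_attained[OF t] by blast
  have "X p t \<noteq> c" using c p(1) inside_no_overlap by blast
  thus ?thesis using p(2) by simp
qed

lemma uniformly_continuous_in_time:
  assumes "0 \<le> T" "0 < \<eta>"
  obtains \<delta> where "\<delta> > 0" and "\<And>p t t'. p \<in> S2 \<Longrightarrow> 0 \<le> t \<Longrightarrow> t \<le> T \<Longrightarrow> 0 \<le> t' \<Longrightarrow> t' \<le> T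
      \<Longrightarrow> \<bar>t - t'\<bar> < \<delta> \<Longrightarrow> norm (X p t - X p t') < \<eta>"
proof -
  have "compact (S2 \<times> {0..T})" by (intro compact_Times compact_sphere compact_Icc)
  moreover have "continuous_on (S2 \<times> {0..T}) (\<lambda>(p, t). X p t)"
    by (rule continuous_on_subset[OF continuous_motion]) auto
  ultimately have "uniformly_continuous_on (S2 \<times> {0..T}) (\<lambda>(p, t). X p t)"
    by (rule compact_uniformly_continuous[rotated])
  then obtain \<delta> where "\<delta> > 0" and \<delta>: "\<And>x x'. x \<in> S2 \<times> {0..T} \<Longrightarrow> x' \<in> S2 \<times> {0..T} \<Longrightarrow>
      dist x' x < \<delta> \<Longrightarrow> dist ((\<lambda>(p, t). X p t) x') ((\<lambda>(p, t). X p t) x) < \<eta>"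
    unfolding uniformly_continuous_on_def using assms(2) by blast
  moreover have "norm (X p t - X p t') < \<eta>"
    if "p \<in> S2" "0 \<le> t" "t \<le> T" "0 \<le> t'" "t' \<le> T" "\<bar>t - t'\<bar> < \<delta>" for p t t'
    using \<delta>[of "(p, t')" "(p, t)"] that by (simp add: dist_Pair_Pair dist_real_def dist_norm)
  ultimately show ?thesis using that by blast
qed

lemma min_dist_continuous_on:
  assumes a: "0 \<le> a"
  shows "continuous_on {a..b} (min_dist X c)"
  unfolding continuous_on_iff
proof (intro ballI allI impI)
  fix t e assume t: "t \<in> {a..b}" and e: "(0::real) < e"
  obtain \<delta> where \<delta>: "\<delta> > 0" "\<And>p t t'. p \<in> S2 \<Longrightarrow> 0 \<le> t \<Longrightarrow> t \<le> b \<Longrightarrow> 0 \<le> t' \<Longrightarrow> t' \<le> b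
      \<Longrightarrow> \<bar>t - t'\<bar> < \<delta> \<Longrightarrow> norm (X p t - X p t') < e / 2"
    using uniformly_continuous_in_time[of b "e / 2"] t a e by auto
  have shift: "min_dist X c t1 \<le> min_dist X c t2 + e / 2"
    if t12: "t1 \<in> {a..b}" "t2 \<in> {a..b}" "\<bar>t1 - t2\<bar> < \<delta>" for t1 t2
  proof -
    obtain p where p: "p \<in> S2" "min_dist X c t2 = norm (X p t2 - c)"
      using min_dist_attained[of t2 c] t12 a by auto
    have "min_dist X c t1 \<le> norm (X p t2 - c) + norm (X p t1 - X p t2)"
      using min_dist_le[OF p(1), of X c t1] norm_triangle_ineq[of "X p t2 - c" "X p t1 - X p t2"]
      by simp
    thus ?thesis using \<delta>(2)[of p t1 t2] t12 a p by auto
  qed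
  show "\<exists>d>0. \<forall>t'\<in>{a..b}. dist t' t < d \<longrightarrow> dist (min_dist X c t') (min_dist X c t) < e"
  proof (intro exI[of _ \<delta>] conjI ballI impI)
    fix t' assume "t' \<in> {a..b}" "dist t' t < \<delta>"
    hence "min_dist X c t' \<le> min_dist X c t + e / 2" "min_dist X c t \<le> min_dist X c t' + e / 2"
      using shift[of t' t] shift[of t t'] t by (auto simp: dist_real_def abs_minus_commute)
    thus "dist (min_dist X c t') (min_dist X c t) < e" using e by (auto simp: dist_real_def abs_less_iff)
  qed (rule \<delta>(1))
qed

end

locale global_ICF_solution =
  fixes X :: "real^3 \<Rightarrow> real \<Rightarrow> real^3"
  assumes solution: "ICF_solution X \<infinity>"

sublocale global_ICF_solution \<subseteq> continuous_motion
  using solution by unfold_locales (simp add: ICF_solution_def)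

context global_ICF_solution
begin

lemma closed_strictly_convex_at: "0 \<le> t \<Longrightarrow> closed_strictly_convex (\<lambda>p. X p t)"
  using solution by (simp add: ICF_solution_def)

lemma smooth_in_chart: "\<sigma> \<in> charts \<Longrightarrow> smooth_on {(w, t). 0 < t} (\<lambda>(w, t). X (\<sigma> w) t)"
  using solution by (simp add: ICF_solution_def)

lemma velocity:
  assumes "\<sigma> \<in> charts" "0 < t"
  obtains n where "is_outer_normal (\<lambda>p. X p t) \<sigma> w n"
    and "((\<lambda>s. X (\<sigma> w) s) has_vector_derivative
           (1 / gauss_curv_chart (\<lambda>w'. X (\<sigma> w') t) w) *\<^sub>R n) (at t)"
proof -
  have "\<forall>\<sigma>\<in>charts. \<forall>w t. 0 < t \<longrightarrow> (\<exists>n. is_outer_normal (\<lambda>p. X p t) \<sigma> w n \<and>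
      ((\<lambda>s. X (\<sigma> w) s) has_vector_derivative
         (1 / gauss_curv_chart (\<lambda>w'. X (\<sigma> w') t) w) *\<^sub>R n) (at t))"
    using solution by (simp add: ICF_solution_def)
  thus ?thesis using assms that by blast
qed

lemma chart_velocity:
  assumes "\<sigma> \<in> charts"
  obtains V where "continuous_on {(w, t). 0 < t} V"
    and "\<And>w t. 0 < t \<Longrightarrow> ((\<lambda>s. X (\<sigma> w) s) has_vector_derivative V (w, t)) (at t)"
  using smooth_on_time_derivative[OF smooth_in_chart[OF assms]] by auto

text \<open>The radial speed at a nearest point is \<open>1 / K\<close>, which is at least \<open>r\<^sup>2\<close> by the
  curvature bound.\<close>
lemma radial_speed_at_nearest_point:
  assumes \<sigma>: "\<sigma> \<in> charts" and t: "0 < t" and c: "c \<in> inside ((\<lambda>p. X p t) ` S2)"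
    and nearest: "norm (X (\<sigma> w) t - c) = min_dist X c t"
    and V: "((\<lambda>s. X (\<sigma> w) s) has_vector_derivative V) (at t)"
  shows "(min_dist X c t)\<^sup>2 \<le> (1 / norm (X (\<sigma> w) t - c)) * ((X (\<sigma> w) t - c) \<bullet> V)"
proof -
  define r K where "r = min_dist X c t" and "K = gauss_curv_chart (\<lambda>w'. X (\<sigma> w') t) w"
  obtain n where normal: "is_outer_normal (\<lambda>p. X p t) \<sigma> w n"
    and "((\<lambda>s. X (\<sigma> w) s) has_vector_derivative (1 / K) *\<^sub>R n) (at t)"
    using velocity[OF \<sigma> t] by (auto simp: K_def)
  hence V_eq: "V = (1 / K) *\<^sub>R n" using vector_derivative_unique_at[OF V] by blast
  have "norm (X (\<sigma> w) t - c) \<le> norm (X p t - c)" if "p \<in> S2" for p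
    using min_dist_le[OF that] nearest by simp
  note nearest_point = nearest_point_normal_and_curvature[OF
      closed_strictly_convex_at[OF less_imp_le[OF t]] \<sigma> c this normal]
  have r: "0 < r" using min_dist_pos[OF _ c] t by (simp add: r_def)
  have K: "0 < K" using closed_strictly_convex_at[of t] \<sigma> t
    by (simp add: closed_strictly_convex_def K_def o_def)
  have "K * r\<^sup>2 \<le> 1" using nearest_point(2) t nearest by (simp add: r_def K_def o_def)
  hence "r\<^sup>2 \<le> 1 / K" using K by (simp add: field_simps)
  also have "1 / K = (1 / r) * ((X (\<sigma> w) t - c) \<bullet> V)"
  proof -
    have "n = (1 / r) *\<^sub>R (X (\<sigma> w) t - c)" using nearest_point(1) nearest by (simp add: r_def)
    hence "(X (\<sigma> w) t - c) \<bullet> V = (1 / K) * (1 / r) * ((X (\<sigma> w) t - c) \<bullet> (X (\<sigma> w) t - c))"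
      by (simp add: V_eq)
    also have "(X (\<sigma> w) t - c) \<bullet> (X (\<sigma> w) t - c) = r * r"
      using nearest by (simp add: r_def dot_square_norm power2_eq_square)
    finally show ?thesis using r by simp
  qed
  finally show ?thesis by (simp add: nearest r_def)
qed

lemma continuous_in_chart: "\<sigma> \<in> charts \<Longrightarrow> 0 \<le> t \<Longrightarrow> continuous_on UNIV (\<lambda>w. X (\<sigma> w) t)"
  using closed_strictly_convex_at[of t]
  by (intro smooth_on_UNIV_continuous) (auto simp: closed_strictly_convex_def o_def)

text \<open>Compactness of the chart disc turns the pointwise estimate into a uniform one.\<close>
lemma slow_points_stay_away:
  assumes \<sigma>: "\<sigma> \<in> charts" and t: "0 < t" and c: "c \<in> inside ((\<lambda>p. X p t) ` S2)" and e: "0 < e"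
    and V: "continuous_on {(w, t). 0 < t} V"
      "\<And>w t. 0 < t \<Longrightarrow> ((\<lambda>s. X (\<sigma> w) s) has_vector_derivative V (w, t)) (at t)"
  obtains \<eta> where "\<eta> > 0" and "\<And>w. norm w \<le> 1 \<Longrightarrow>
      (1 / norm (X (\<sigma> w) t - c)) * ((X (\<sigma> w) t - c) \<bullet> V (w, t)) \<le> (min_dist X c t)\<^sup>2 - e \<Longrightarrow>
      min_dist X c t + \<eta> \<le> norm (X (\<sigma> w) t - c)"
proof -
  define r where "r = min_dist X c t"
  define speed where "speed w = (1 / norm (X (\<sigma> w) t - c)) * ((X (\<sigma> w) t - c) \<bullet> V (w, t))" for w
  define B where "B = cball 0 1 \<inter> speed -` {..r\<^sup>2 - e}"
  have r: "0 < r" using min_dist_pos[OF _ c] t by (simp add: r_def)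
  have far: "r \<le> norm (X (\<sigma> w) t - c)" for w
    using min_dist_le[OF charts_S2[OF \<sigma>]] by (simp add: r_def)
  have cont_X: "continuous_on UNIV (\<lambda>w. X (\<sigma> w) t)" using continuous_in_chart \<sigma> t by simp
  moreover have "continuous_on UNIV (\<lambda>w. V (w, t))"
    by (rule continuous_on_compose2[OF V(1)]) (use t in \<open>auto intro!: continuous_intros\<close>)
  moreover have "norm (X (\<sigma> w) t - c) \<noteq> 0" for w using far[of w] r by linarith
  ultimately have "continuous_on UNIV speed"
    unfolding speed_def by (intro continuous_intros) auto
  hence "closed B" unfolding B_def
    by (rule_tac continuous_closed_preimage) (auto intro: continuous_on_subset)
  hence "compact B" by (auto simp: compact_eq_bounded_closed B_def intro: bounded_subset)
  moreover have "continuous_on B (\<lambda>w. norm (X (\<sigma> w) t - c))"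
    using continuous_on_subset[OF cont_X, of B] by (intro continuous_intros) auto
  moreover have "r < norm (X (\<sigma> w) t - c)" if "w \<in> B" for w
  proof (rule ccontr)
    assume "\<not> ?thesis"
    hence "norm (X (\<sigma> w) t - c) = min_dist X c t" using far[of w] by (simp add: r_def)
    from radial_speed_at_nearest_point[OF \<sigma> t c this V(2)[OF t]]
    have "r\<^sup>2 \<le> speed w" by (simp add: speed_def r_def)
    thus False using that e by (simp add: B_def)
  qed
  ultimately have "\<exists>\<eta>>0. \<forall>w\<in>B. r + \<eta> \<le> norm (X (\<sigma> w) t - c)"
    by (rule compact_uniform_gap)
  thus ?thesis using that by (auto simp: B_def speed_def r_def)
qed

lemma chart_distance_growth:
  assumes \<sigma>: "\<sigma> \<in> charts" and t: "0 < t" and c: "c \<in> inside ((\<lambda>p. X p t) ` S2)" and e: "0 < e"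
  obtains \<eta> \<delta> where "\<eta> > 0" and "\<delta> > 0" and "\<And>w s. norm w \<le> 1 \<Longrightarrow>
      norm (X (\<sigma> w) t - c) < min_dist X c t + \<eta> \<Longrightarrow> 0 < s \<Longrightarrow> s < \<delta> \<Longrightarrow>
      min_dist X c t + s * ((min_dist X c t)\<^sup>2 - e) \<le> norm (X (\<sigma> w) (t + s) - c)"
proof -
  define r where "r = min_dist X c t"
  obtain V where V: "continuous_on {(w, t). 0 < t} V"
      "\<And>w t. 0 < t \<Longrightarrow> ((\<lambda>s. X (\<sigma> w) s) has_vector_derivative V (w, t)) (at t)"
    using chart_velocity[OF \<sigma>] by blast
  obtain \<eta> where \<eta>: "\<eta> > 0" "\<And>w. norm w \<le> 1 \<Longrightarrow>
      (1 / norm (X (\<sigma> w) t - c)) * ((X (\<sigma> w) t - c) \<bullet> V (w, t)) \<le> r\<^sup>2 - e / 2 \<Longrightarrow>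
      r + \<eta> \<le> norm (X (\<sigma> w) t - c)"
    using slow_points_stay_away[OF \<sigma> t c _ V, of "e / 2"] e by (auto simp: r_def)
  obtain \<delta> where \<delta>: "\<delta> > 0" "\<forall>w\<in>cball 0 1. \<forall>s. 0 < s \<and> s < \<delta> \<longrightarrow>
      norm (X (\<sigma> w) (t + s) - X (\<sigma> w) t - s *\<^sub>R V (w, t)) \<le> e / 2 * s"
    using uniform_time_differentiability[of "cball 0 1" V "\<lambda>(w, s). X (\<sigma> w) s" t "e / 2"] V t e
    by auto
  have "r + s * (r\<^sup>2 - e) \<le> norm (X (\<sigma> w) (t + s) - c)"
    if w: "norm w \<le> 1" "norm (X (\<sigma> w) t - c) < r + \<eta>" and s: "0 < s" "s < \<delta>" for w s
  proof -
    have "0 < r" using min_dist_pos[OF _ c] t by (simp add: r_def)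
    moreover have "r \<le> norm (X (\<sigma> w) t - c)"
      using min_dist_le[OF charts_S2[OF \<sigma>]] by (simp add: r_def)
    moreover have "r\<^sup>2 - e / 2 \<le> (1 / norm (X (\<sigma> w) t - c)) * ((X (\<sigma> w) t - c) \<bullet> V (w, t))"
      using \<eta>(2)[OF w(1)] w(2) by linarith
    ultimately have "r + s * ((r\<^sup>2 - e / 2) - e / 2) \<le> norm (X (\<sigma> w) t - c + (X (\<sigma> w) (t + s) - X (\<sigma> w) t))"
      using \<delta>(2) w(1) s by (intro norm_growth_from_radial_speed) auto
    thus ?thesis by simp
  qed
  thus ?thesis using that \<eta>(1) \<delta>(1) by (simp add: r_def)
qed

lemma near_points_distance_growth:
  assumes t: "0 < t" and c: "c \<in> inside ((\<lambda>p. X p t) ` S2)" and e: "0 < e"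
  obtains \<eta> \<delta> where "\<eta> > 0" and "\<delta> > 0" and "\<And>p s. p \<in> S2 \<Longrightarrow>
      norm (X p t - c) < min_dist X c t + \<eta> \<Longrightarrow> 0 < s \<Longrightarrow> s < \<delta> \<Longrightarrow>
      min_dist X c t + s * ((min_dist X c t)\<^sup>2 - e) \<le> norm (X p (t + s) - c)"
proof -
  obtain \<eta>N \<delta>N where N: "\<eta>N > 0" "\<delta>N > 0" "\<And>w s. norm w \<le> 1 \<Longrightarrow>
      norm (X (chartN w) t - c) < min_dist X c t + \<eta>N \<Longrightarrow> 0 < s \<Longrightarrow> s < \<delta>N \<Longrightarrow>
      min_dist X c t + s * ((min_dist X c t)\<^sup>2 - e) \<le> norm (X (chartN w) (t + s) - c)"
    using chart_distance_growth[OF _ t c e, of chartN] by (auto simp: charts_def)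
  obtain \<eta>S \<delta>S where S: "\<eta>S > 0" "\<delta>S > 0" "\<And>w s. norm w \<le> 1 \<Longrightarrow>
      norm (X (chartS w) t - c) < min_dist X c t + \<eta>S \<Longrightarrow> 0 < s \<Longrightarrow> s < \<delta>S \<Longrightarrow>
      min_dist X c t + s * ((min_dist X c t)\<^sup>2 - e) \<le> norm (X (chartS w) (t + s) - c)"
    using chart_distance_growth[OF _ t c e, of chartS] by (auto simp: charts_def)
  show ?thesis
  proof (rule that[of "min \<eta>N \<eta>S" "min \<delta>N \<delta>S"])
    fix p s assume "p \<in> S2" "norm (X p t - c) < min_dist X c t + min \<eta>N \<eta>S" "0 < s" "s < min \<delta>N \<delta>S"
    moreover obtain \<sigma> w where "\<sigma> \<in> charts" "norm w \<le> 1" "\<sigma> w = p"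
      using charts_cover[OF \<open>p \<in> S2\<close>] by blast
    ultimately show "min_dist X c t + s * ((min_dist X c t)\<^sup>2 - e) \<le> norm (X p (t + s) - c)"
      using N(3) S(3) by (auto simp: charts_def)
  qed (use N S in auto)
qed

lemma min_dist_right_Dini_bound:
  assumes t: "0 < t" and c: "c \<in> inside ((\<lambda>p. X p t) ` S2)" and e: "0 < e"
  shows "\<exists>\<delta>>0. \<forall>s. 0 < s \<and> s < \<delta> \<longrightarrow> min_dist X c t + s * ((min_dist X c t)\<^sup>2 - e) \<le> min_dist X c (t + s)"
proof -
  define r where "r = min_dist X c t"
  obtain \<eta> \<delta>1 where \<eta>: "\<eta> > 0" "\<delta>1 > 0" "\<And>p s. p \<in> S2 \<Longrightarrow> norm (X p t - c) < r + \<eta> \<Longrightarrow>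
      0 < s \<Longrightarrow> s < \<delta>1 \<Longrightarrow> r + s * (r\<^sup>2 - e) \<le> norm (X p (t + s) - c)"
    using near_points_distance_growth[OF t c e] by (auto simp: r_def)
  obtain \<delta>2 where \<delta>2: "\<delta>2 > 0" "\<And>p t1 t2. p \<in> S2 \<Longrightarrow> 0 \<le> t1 \<Longrightarrow> t1 \<le> t + 1 \<Longrightarrow> 0 \<le> t2 \<Longrightarrow>
      t2 \<le> t + 1 \<Longrightarrow> \<bar>t1 - t2\<bar> < \<delta>2 \<Longrightarrow> norm (X p t1 - X p t2) < \<eta> / 2"
    using uniformly_continuous_in_time[of "t + 1" "\<eta> / 2"] t \<eta> by auto
  have pos: "0 < 2 * (r\<^sup>2 + 1)" by (smt (verit) zero_le_power2)
  define \<delta> where "\<delta> = min (min \<delta>1 \<delta>2) (min 1 (\<eta> / (2 * (r\<^sup>2 + 1))))"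
  have "r + s * (r\<^sup>2 - e) \<le> norm (X p (t + s) - c)" if p: "p \<in> S2" and s: "0 < s" "s < \<delta>" for p s
  proof (cases "norm (X p t - c) < r + \<eta>")
    case True
    thus ?thesis using \<eta>(3)[OF p True s(1)] s(2) by (simp add: \<delta>_def)
  next
    case False
    have "s * (2 * (r\<^sup>2 + 1)) < \<eta>"
      using s pos by (simp add: \<delta>_def pos_less_divide_eq)
    moreover have "s * (r\<^sup>2 - e) \<le> s * (r\<^sup>2 + 1)" using s(1) e by (intro mult_left_mono) auto
    ultimately have "s * (r\<^sup>2 - e) < \<eta> / 2" by (simp add: algebra_simps)
    moreover have "norm (X p (t + s) - X p t) < \<eta> / 2"
      using \<delta>2(2)[OF p, of "t + s" t] s t by (simp add: \<delta>_def)
    ultimately show ?thesis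
      using False norm_triangle_ineq4[of "X p (t + s) - c" "X p (t + s) - X p t"] by simp
  qed
  hence "\<forall>s. 0 < s \<and> s < \<delta> \<longrightarrow> r + s * (r\<^sup>2 - e) \<le> min_dist X c (t + s)"
    by (auto intro: min_dist_greatest)
  moreover have "0 < \<delta>" using \<eta> \<delta>2 pos by (simp add: \<delta>_def)
  ultimately show ?thesis by (auto simp: r_def)
qed

end

lemma min_dist_le_support:
  assumes c: "c \<in> inside ((\<lambda>p. X p t) ` S2)" and e: "norm e = 1"
  shows "\<exists>p\<in>S2. min_dist X c t \<le> e \<bullet> (X p t - c)"
proof -
  have "e \<noteq> 0" using e by auto
  then obtain l where l: "l \<ge> 0" "c + l *\<^sub>R e \<in> (\<lambda>p. X p t) ` S2"
    by (rule inside_ray_meets[OF c])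
  then obtain p where p: "p \<in> S2" "X p t = c + l *\<^sub>R e" by auto
  have "e \<bullet> (X p t - c) = l" "norm (X p t - c) = l"
    using p(2) e l(1) by (simp_all add: dot_square_norm)
  thus ?thesis using min_dist_le[OF p(1), of X c t] p(1) by auto
qed

context global_ICF_solution
begin

lemma min_dist_lower_growth:
  assumes a: "0 < a" "a \<le> b"
    and inside: "\<And>t. a \<le> t \<Longrightarrow> t \<le> b \<Longrightarrow> c \<in> inside ((\<lambda>p. X p t) ` S2)"
    and L: "\<And>t. a \<le> t \<Longrightarrow> t \<le> b \<Longrightarrow> L \<le> (min_dist X c t)\<^sup>2"
  shows "min_dist X c a + L * (b - a) \<le> min_dist X c b"
proof (rule growth_from_right_Dini_bound[OF a(2) min_dist_continuous_on])
  show "0 \<le> a" using a by simp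
  fix t e :: real assume t: "a \<le> t" "t < b" and e: "0 < e"
  obtain \<delta> where \<delta>: "\<delta> > 0" "\<And>s. 0 < s \<Longrightarrow> s < \<delta> \<Longrightarrow>
      min_dist X c t + s * ((min_dist X c t)\<^sup>2 - e) \<le> min_dist X c (t + s)"
    using min_dist_right_Dini_bound[of t c e] inside[of t] t a e by auto
  have "min_dist X c t + s * (L - e) \<le> min_dist X c (t + s)" if "0 < s" "s < \<delta>" for s
  proof -
    have "s * (L - e) \<le> s * ((min_dist X c t)\<^sup>2 - e)"
      using L[of t] t that by (intro mult_left_mono) auto
    thus ?thesis using \<delta>(2)[OF that] by linarith
  qed
  thus "\<exists>\<delta>>0. \<forall>s. 0 < s \<and> s < \<delta> \<longrightarrow> min_dist X c t + s * (L - e) \<le> min_dist X c (t + s)"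
    using \<delta>(1) by blast
qed

lemma min_dist_mono:
  assumes "0 < a" "a \<le> b" "\<And>t. a \<le> t \<Longrightarrow> t \<le> b \<Longrightarrow> c \<in> inside ((\<lambda>p. X p t) ` S2)"
  shows "min_dist X c a \<le> min_dist X c b"
  using min_dist_lower_growth[OF assms, of 0] by simp

lemma min_dist_growth:
  assumes "0 < a" "a \<le> b" "\<And>t. a \<le> t \<Longrightarrow> t \<le> b \<Longrightarrow> c \<in> inside ((\<lambda>p. X p t) ` S2)"
  shows "min_dist X c a + (min_dist X c a)\<^sup>2 * (b - a) \<le> min_dist X c b"
proof (rule min_dist_lower_growth[OF assms])
  fix t assume "a \<le> t" "t \<le> b"
  moreover from this have "min_dist X c a \<le> min_dist X c t"
    using assms by (intro min_dist_mono) auto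
  ultimately show "(min_dist X c a)\<^sup>2 \<le> (min_dist X c t)\<^sup>2"
    using assms min_dist_pos[of a c] by (intro power_mono) auto
qed

text \<open>A point well inside the surface stays inside under small perturbations: the surface
  still meets every half-space \<open>{y. e \<bullet> (y - c) > 0}\<close>, so convexity leaves no room to
  separate \<open>c\<close> from it.\<close>
lemma inside_stable:
  assumes t: "0 \<le> t" "0 \<le> t'" and c: "c \<in> inside ((\<lambda>p. X p t) ` S2)"
    and \<rho>: "0 < \<rho>" "\<rho> \<le> min_dist X c t"
    and close: "\<And>p. p \<in> S2 \<Longrightarrow> norm (X p t' - X p t) < \<rho> / 2"
  shows "c \<in> inside ((\<lambda>p. X p t') ` S2)"
proof (rule inside_if_not_separated)
  show "compact ((\<lambda>p. X p t') ` S2)"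
    by (rule compact_continuous_image[OF continuous_at_time[OF t(2)] compact_sphere])
  show "convex ((\<lambda>p. X p t') ` S2 \<union> inside ((\<lambda>p. X p t') ` S2))"
    using closed_strictly_convex_at[OF t(2)] by (simp add: closed_strictly_convex_def)
  have far: "\<rho> \<le> norm (X p t - c)" if "p \<in> S2" for p
    using min_dist_le[OF that, of X c t] \<rho>(2) by simp
  show "c \<notin> (\<lambda>p. X p t') ` S2"
  proof
    assume "c \<in> (\<lambda>p. X p t') ` S2"
    then obtain p where p: "p \<in> S2" "X p t' = c" by auto
    hence "norm (X p t - c) < \<rho> / 2" using close[OF p(1)] by (simp add: norm_minus_commute)
    thus False using far[OF p(1)] \<rho>(1) by simp
  qed
  fix e :: "real^3" assume e: "norm e = 1"
  obtain p where p: "p \<in> S2" "\<rho> \<le> e \<bullet> (X p t - c)"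
    using min_dist_le_support[where X = X and t = t, OF c e] \<rho>(2) by force
  have "- (e \<bullet> (X p t' - X p t)) \<le> norm (X p t' - X p t)"
    using norm_cauchy_schwarz[of "- e" "X p t' - X p t"] e by simp
  hence "0 < e \<bullet> (X p t' - c)"
    using p close[OF p(1)] \<rho>(1) by (simp add: inner_diff_right)
  thus "\<exists>y\<in>(\<lambda>p. X p t') ` S2. 0 < e \<bullet> (y - c)" using p(1) by blast
qed

lemma inside_persists:
  assumes t0: "0 < t0" and c: "c \<in> inside ((\<lambda>p. X p t0) ` S2)" and t: "t0 \<le> t"
  shows "c \<in> inside ((\<lambda>p. X p t) ` S2)"
proof (rule continuous_induction[where P = "\<lambda>t. c \<in> inside ((\<lambda>p. X p t) ` S2)", OF c _ _ t])
  fix t assume t: "t0 < t" and before: "\<And>s. t0 \<le> s \<Longrightarrow> s < t \<Longrightarrow> c \<in> inside ((\<lambda>p. X p s) ` S2)"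
  define r0 where "r0 = min_dist X c t0"
  have r0: "0 < r0" using min_dist_pos[of t0 c] c t0 by (simp add: r0_def)
  obtain \<delta> where \<delta>: "\<delta> > 0" "\<And>p t1 t2. p \<in> S2 \<Longrightarrow> 0 \<le> t1 \<Longrightarrow> t1 \<le> t \<Longrightarrow> 0 \<le> t2 \<Longrightarrow>
      t2 \<le> t \<Longrightarrow> \<bar>t1 - t2\<bar> < \<delta> \<Longrightarrow> norm (X p t1 - X p t2) < r0 / 2"
    using uniformly_continuous_in_time[of t "r0 / 2"] t t0 r0 by auto
  define s where "s = max t0 (t - \<delta> / 2)"
  have s: "t0 \<le> s" "s < t" "\<bar>t - s\<bar> < \<delta>" using t \<delta>(1) by (auto simp: s_def)
  show "c \<in> inside ((\<lambda>p. X p t) ` S2)"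
  proof (rule inside_stable[OF _ _ before[OF s(1,2)] r0])
    show "r0 \<le> min_dist X c s"
      unfolding r0_def using t0 s before by (intro min_dist_mono) auto
  qed (use \<delta>(2) s t0 in auto)
next
  fix t assume t: "t0 \<le> t" and c: "c \<in> inside ((\<lambda>p. X p t) ` S2)"
  define r where "r = min_dist X c t"
  have r: "0 < r" using min_dist_pos[of t c] c t t0 by (simp add: r_def)
  obtain \<delta> where \<delta>: "\<delta> > 0" "\<And>p t1 t2. p \<in> S2 \<Longrightarrow> 0 \<le> t1 \<Longrightarrow> t1 \<le> t + 1 \<Longrightarrow> 0 \<le> t2 \<Longrightarrow>
      t2 \<le> t + 1 \<Longrightarrow> \<bar>t1 - t2\<bar> < \<delta> \<Longrightarrow> norm (X p t1 - X p t2) < r / 2"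
    using uniformly_continuous_in_time[of "t + 1" "r / 2"] t t0 r by auto
  have "c \<in> inside ((\<lambda>p. X p s) ` S2)" if "t < s" "s < t + min \<delta> 1" for s
    by (rule inside_stable[OF _ _ c r eq_refl[OF r_def]]) (use \<delta>(2) that t t0 in auto)
  thus "\<exists>d>0. \<forall>s. t < s \<and> s < t + d \<longrightarrow> c \<in> inside ((\<lambda>p. X p s) ` S2)"
    using \<delta>(1) by (intro exI[of _ "min \<delta> 1"]) auto
qed

theorem no_point_inside:
  assumes t0: "0 < t0"
  shows "c \<notin> inside ((\<lambda>p. X p t0) ` S2)"
proof
  assume c: "c \<in> inside ((\<lambda>p. X p t0) ` S2)"
  show False
  proof (rule quadratic_growth_blows_up[of "min_dist X c" t0])
    show "0 < min_dist X c t0" using min_dist_pos[of t0 c] c t0 by simp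
    fix s t assume "t0 \<le> s" "s \<le> t"
    thus "min_dist X c s + (min_dist X c s)\<^sup>2 * (t - s) \<le> min_dist X c t"
      using t0 inside_persists[OF t0 c] by (intro min_dist_growth) auto
  qed
qed

end

theorem lemma4p6:
  fixes X :: "real^3 \<Rightarrow> real \<Rightarrow> real^3" and T :: ereal
  assumes "maximal_ICF_solution X T"
  shows "T < \<infinity>"
proof (rule ccontr)
  assume "\<not> T < \<infinity>"
  hence "ICF_solution X \<infinity>" using assms by (simp add: maximal_ICF_solution_def)
  then interpret global_ICF_solution X by unfold_locales
  obtain c where "c \<in> inside ((\<lambda>p. X p 1) ` S2)"
    using closed_strictly_convex_inside_nonempty[OF closed_strictly_convex_at[OF zero_le_one]] by auto
  thus False using no_point_inside[of 1 c] by simp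
qed

end
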